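(* Let $1\le q<\infty$ and $\alpha\ge0$. Then $\|f\|_{\mathfrak L^{q,\infty}(\log\mathfrak L)^\alpha}\le\|f\|_{L^q(\log L)^\alpha}$ for all $f\in L^q(\log L)^\alpha$, and $\|f\|_{L^{q,\infty}(\log L)^\alpha}\le\|f\|_{\mathfrak L^{q,\infty}(\log\mathfrak L)^\alpha}$ for all $f\in\mathfrak L^{q,\infty}(\log\mathfrak L)^\alpha$. Furthermore, if $\alpha>0$, then $L^q(\log L)^\alpha\subsetneq\mathfrak L^{q,\infty}(\log\mathfrak L)^\alpha\subsetneq L^{q,\infty}(\log L)^\alpha$.
   Context: All functions are on $\mathbb R^n$. For measurable $f$, $f^*(s):=\inf\{\lambda>0:|\{|f|>\lambda\}|\le s\}$ ($s\ge0$) is the non-increasing rearrangement. $\|f\|_{L^q(\log L)^\alpha}:=(\int_0^\infty[\log(e+1/s)]^\alpha f^*(s)^q\,ds)^{1/q}$, $\|f\|_{L^{q,\infty}(\log L)^\alpha}:=\sup_{s>0}\{[\log(e+1/s)]^\alpha sf^*(s)^q\}^{1/q}$, and $\|f\|_{\mathfrak L^{q,\infty}(\log\mathfrak L)^\alpha}:=\sup_{s>0}\{[\log(e+1/s)]^\alpha\sup_{|E|=s}\int_E|f|^q\,dx\}^{1/q}$ (inner sup over measurable $E$ with $|E|=s$); each space is the set of $f\in L^1_{\rm loc}$ with the corresponding norm finite. *)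

theory Defs
  imports "HOL-Analysis.Analysis"
begin

definition enn_powr :: "ennreal \<Rightarrow> real \<Rightarrow> ennreal" where
  "enn_powr x p = (if x = top then top else ennreal (enn2real x powr p))"

definition L1_loc :: "('a::euclidean_space \<Rightarrow> real) set" where
  "L1_loc = {f. f \<in> borel_measurable lebesgue \<and>
                 (\<forall>K. compact K \<longrightarrow> set_integrable lebesgue K f)}"

text \<open>Non-increasing rearrangement f*(s) = inf {lambda > 0 : |{|f| > lambda}| <= s}
  (value top if the set is empty).\<close>
definition rearr :: "('a::euclidean_space \<Rightarrow> real) \<Rightarrow> real \<Rightarrow> ennreal" where
  "rearr f s = Inf {ennreal t | t. t > 0 \<and>
                  emeasure lebesgue {x. \<bar>f x\<bar> > t} \<le> ennreal s}"

definition logw :: "real \<Rightarrow> real \<Rightarrow> real" where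
  "logw \<alpha> s = (ln (exp 1 + 1 / s)) powr \<alpha>"

definition LqlogL_norm :: "real \<Rightarrow> real \<Rightarrow> ('a::euclidean_space \<Rightarrow> real) \<Rightarrow> ennreal" where
  "LqlogL_norm q \<alpha> f =
     enn_powr (\<integral>\<^sup>+ s \<in> {0<..}. ennreal (logw \<alpha> s) * enn_powr (rearr f s) q \<partial>lborel) (1 / q)"

definition weak_LqlogL_norm :: "real \<Rightarrow> real \<Rightarrow> ('a::euclidean_space \<Rightarrow> real) \<Rightarrow> ennreal" where
  "weak_LqlogL_norm q \<alpha> f =
     (SUP s \<in> {0<..}. enn_powr (ennreal (logw \<alpha> s * s) * enn_powr (rearr f s) q) (1 / q))"

definition frak_LqlogL_norm :: "real \<Rightarrow> real \<Rightarrow> ('a::euclidean_space \<Rightarrow> real) \<Rightarrow> ennreal" where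
  "frak_LqlogL_norm q \<alpha> f =
     (SUP s \<in> {0<..}. enn_powr (ennreal (logw \<alpha> s) *
        (SUP E \<in> {E \<in> sets lebesgue. emeasure lebesgue E = ennreal s}.
           \<integral>\<^sup>+ x \<in> E. ennreal (\<bar>f x\<bar> powr q) \<partial>lebesgue)) (1 / q))"

definition LqlogL :: "real \<Rightarrow> real \<Rightarrow> ('a::euclidean_space \<Rightarrow> real) set" where
  "LqlogL q \<alpha> = {f \<in> L1_loc. LqlogL_norm q \<alpha> f < top}"

definition weak_LqlogL :: "real \<Rightarrow> real \<Rightarrow> ('a::euclidean_space \<Rightarrow> real) set" where
  "weak_LqlogL q \<alpha> = {f \<in> L1_loc. weak_LqlogL_norm q \<alpha> f < top}"

definition frak_LqlogL :: "real \<Rightarrow> real \<Rightarrow> ('a::euclidean_space \<Rightarrow> real) set" where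
  "frak_LqlogL q \<alpha> = {f \<in> L1_loc. frak_LqlogL_norm q \<alpha> f < top}"

end

theory Submission
  imports Defs
begin

text \<open>
  The first inequality is the Hardy--Littlewood inequality
  \<open>\<integral>\<^sub>E |f|^q \<le> \<integral>\<^sub>0^|E| f*(t)^q dt\<close> together with the monotonicity of the weight
  \<open>log(e + 1/t)^\<alpha>\<close> in \<open>t\<close>. For the second, if \<open>\<lambda> < f*(s)\<close> then \<open>{|f| > \<lambda>}\<close> has measure larger
  than \<open>s\<close>; Lebesgue measure has no atoms, so this set contains a set \<open>E\<close> of measure exactly \<open>s\<close>,
  and \<open>\<integral>\<^sub>E |f|^q \<ge> s \<lambda>^q\<close>.

  For \<open>\<alpha> > 0\<close> both inclusions are strict, witnessed by radial functions \<open>\<phi>(\<omega>\<^sub>n |x|^n)\<close>, whose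
  rearrangement is \<open>\<phi>\<close>. The profile \<open>(1 + t)^(-1/q)\<close> lies in the weak space, but its \<open>q\<close>-th
  power integrates to \<open>log(1 + s)\<close> over a ball of measure \<open>s\<close>. The profile with
  \<open>\<phi>(t)^q = 1/(t (-log t)^(\<alpha>+1))\<close> near \<open>0\<close> has \<open>\<integral>\<^sub>0^s \<phi>^q \<le> (-log s)^(-\<alpha>)/\<alpha>\<close>, which the
  weight compensates, whereas \<open>\<integral> (-log t)^\<alpha> \<phi>(t)^q dt = \<integral> dt/(t (-log t))\<close> diverges.
\<close>

lemma enn_powr_ennreal [simp]: "0 \<le> x \<Longrightarrow> enn_powr (ennreal x) p = ennreal (x powr p)"
  by (simp add: enn_powr_def)

lemma enn_powr_top [simp]: "enn_powr top p = top"
  by (simp add: enn_powr_def)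

lemma enn_powr_mono:
  assumes "x \<le> y" "0 \<le> p"
  shows "enn_powr x p \<le> enn_powr y p"
proof (cases y)
  case (real b)
  with assms(1) obtain a where "x = ennreal a" "0 \<le> a" "a \<le> b"
    by (cases x) (auto simp: top_unique)
  with real assms(2) show ?thesis
    by (simp add: powr_mono2)
qed simp

lemma less_powr_iff:
  fixes l a p :: real
  assumes "0 \<le> l" "0 \<le> a" "0 < p"
  shows "l < a powr p \<longleftrightarrow> l powr (1 / p) < a"
proof
  assume "l < a powr p"
  then have "l powr (1 / p) < (a powr p) powr (1 / p)"
    using assms by (intro powr_less_mono2) auto
  then show "l powr (1 / p) < a"
    using assms by (simp add: powr_powr)
next
  assume "l powr (1 / p) < a"
  then have "(l powr (1 / p)) powr p < a powr p"
    using assms by (intro powr_less_mono2) auto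
  then show "l < a powr p"
    using assms by (simp add: powr_powr)
qed

lemma ennreal_less_enn_powr:
  assumes "0 \<le> l" "0 < p" "ennreal (l powr (1 / p)) < x"
  shows "ennreal l < enn_powr x p"
proof (cases x)
  case (real m)
  with assms have "l < m powr p"
    by (simp add: less_powr_iff ennreal_less_iff)
  with real assms(1) show ?thesis
    by (simp add: ennreal_less_iff)
qed simp

lemma powr_inverse_le_1_plus:
  fixes x q :: real
  assumes "0 \<le> x" "1 \<le> q"
  shows "x powr (1 / q) \<le> 1 + x"
proof (cases "x \<le> 1")
  case True
  then have "x powr (1 / q) \<le> 1 powr (1 / q)"
    using assms by (intro powr_mono2) auto
  then show ?thesis
    using assms by simp
next
  case False
  then have "x powr (1 / q) \<le> x powr 1"
    using assms by (intro powr_mono) auto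
  with False show ?thesis
    by simp
qed

lemma ennreal_eq_top_of_nat_le:
  fixes x :: ennreal
  assumes "\<And>n. of_nat n \<le> x"
  shows "x = top"
  by (metis assms SUP_least ennreal_SUP_of_nat_eq_top top_unique)

lemma borel_measurable_antimono_ennreal:
  fixes F :: "real \<Rightarrow> ennreal"
  assumes "antimono F"
  shows "F \<in> borel_measurable borel"
proof (rule borel_measurableI_greater)
  fix y
  show "{x \<in> space borel. y < F x} \<in> sets borel"
    by (rule real_interval_borel_measurable)
      (use assms in \<open>auto simp: is_interval_1 antimono_def intro: order_less_le_trans\<close>)
qed

lemma sigma_finite_lebesgue: "sigma_finite_measure (lebesgue :: 'a::euclidean_space measure)"
proof
  let ?B = "range (\<lambda>n::nat. cball (0::'a) (real n))"
  show "\<exists>A. countable A \<and> A \<subseteq> sets (lebesgue :: 'a measure) \<and> \<Union> A = space lebesgue \<and>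
      (\<forall>a\<in>A. emeasure lebesgue a \<noteq> \<infinity>)"
  proof (intro exI[of _ ?B] conjI ballI)
    show "\<Union> ?B = space lebesgue"
      by (auto simp: real_arch_simple)
  next
    fix a assume "a \<in> ?B"
    then show "emeasure lebesgue a \<noteq> \<infinity>"
      using emeasure_lborel_cball_finite[of "0::'a"] by (auto simp: less_top)
  qed auto
qed

lemma emeasure_lborel_ennreal_less:
  fixes y :: ennreal
  shows "emeasure lborel {t::real. 0 \<le> t \<and> ennreal t < y} = y"
proof (cases y)
  case (real r)
  then have "{t::real. 0 \<le> t \<and> ennreal t < y} = {0..<r}"
    by (auto simp: ennreal_less_iff)
  with real show ?thesis
    by simp
next
  case top
  have "of_nat n \<le> emeasure lborel {0::real..}" for n
  proof -
    have "emeasure lborel {0::real..<real n} \<le> emeasure lborel {0::real..}"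
      by (rule emeasure_mono) auto
    then show ?thesis
      by (simp add: ennreal_of_nat_eq_real_of_nat)
  qed
  then have "emeasure lborel {0::real..} = top"
    by (rule ennreal_eq_top_of_nat_le)
  with top show ?thesis
    by (simp add: atLeast_def)
qed

lemma nn_integral_layer_cake:
  assumes "sigma_finite_measure M" and g[measurable]: "g \<in> borel_measurable M"
  shows "(\<integral>\<^sup>+x. g x \<partial>M) = (\<integral>\<^sup>+t\<in>{0..}. emeasure M {x\<in>space M. ennreal t < g x} \<partial>lborel)"
proof -
  interpret pair_sigma_finite M lborel
    using assms(1) by (simp add: pair_sigma_finite.intro lborel.sigma_finite_measure_axioms)
  define h :: "'a \<Rightarrow> real \<Rightarrow> ennreal"
    where "h x = indicator {t::real. 0 \<le> t \<and> ennreal t < g x}" for x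
  have [measurable]: "(\<lambda>(x, t). h x t) \<in> borel_measurable (M \<Otimes>\<^sub>M lborel)"
    unfolding h_def indicator_def by measurable
  have "(\<integral>\<^sup>+x. g x \<partial>M) = (\<integral>\<^sup>+x. (\<integral>\<^sup>+t. h x t \<partial>lborel) \<partial>M)"
    unfolding h_def by (simp add: emeasure_lborel_ennreal_less)
  also have "\<dots> = (\<integral>\<^sup>+t. (\<integral>\<^sup>+x. h x t \<partial>M) \<partial>lborel)"
    using Fubini'[of "\<lambda>x t. h x t"] by simp
  also have "\<dots> = (\<integral>\<^sup>+t\<in>{0..}. emeasure M {x\<in>space M. ennreal t < g x} \<partial>lborel)"
  proof (rule nn_integral_cong)
    fix t :: real
    have "(\<integral>\<^sup>+x. h x t \<partial>M) = (\<integral>\<^sup>+x. indicator {x\<in>space M. 0 \<le> t \<and> ennreal t < g x} x \<partial>M)"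
      by (rule nn_integral_cong) (auto simp: h_def indicator_def)
    also have "\<dots> = emeasure M {x\<in>space M. 0 \<le> t \<and> ennreal t < g x}"
      by (rule nn_integral_indicator) measurable
    finally
    show "(\<integral>\<^sup>+x. h x t \<partial>M) = emeasure M {x\<in>space M. ennreal t < g x} * indicator {0..} t"
      by (cases "0 \<le> t") auto
  qed
  finally show ?thesis .
qed

lemma nn_integral_Ioo_le_SUP_Icc:
  fixes f :: "real \<Rightarrow> ennreal"
  assumes [measurable]: "f \<in> borel_measurable borel" and "a < b"
  shows "(\<integral>\<^sup>+t\<in>{a<..<b}. f t \<partial>lborel) \<le> (SUP c\<in>{a<..b}. \<integral>\<^sup>+t\<in>{c..b}. f t \<partial>lborel)"
proof -
  define c where "c k = a + (b - a) / Suc k" for k :: nat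
  have c: "c k \<in> {a<..b}" for k
  proof -
    have "(b - a) / Suc k \<le> (b - a) / 1"
      using \<open>a < b\<close> by (intro divide_left_mono) auto
    with \<open>a < b\<close> show ?thesis
      unfolding c_def by auto
  qed
  have c_antimono: "c (Suc k) \<le> c k" for k
  proof -
    have "(b - a) / Suc (Suc k) \<le> (b - a) / Suc k"
      using \<open>a < b\<close> by (intro divide_left_mono) simp_all
    then show ?thesis
      unfolding c_def by simp
  qed
  have "f t * indicator {a<..<b} t \<le> (SUP k. f t * indicator {c k..b} t)" for t
  proof (cases "a < t \<and> t < b")
    case True
    obtain k :: nat where "(b - a) / (t - a) < real k"
      using reals_Archimedean2 by blast
    then have "b - a < (t - a) * real k"
      using True by (simp add: pos_divide_less_eq mult.commute)
    also have "\<dots> \<le> (t - a) * real (Suc k)"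
      using True by (intro mult_left_mono) auto
    finally have "(b - a) / real (Suc k) < t - a"
      by (simp add: pos_divide_less_eq)
    then have "c k \<le> t"
      unfolding c_def by simp
    with True show ?thesis
      by (intro SUP_upper2[of k]) (auto simp: indicator_def)
  next
    case False
    then have "indicator {a<..<b} t = (0::ennreal)"
      by (simp add: indicator_def)
    then show ?thesis
      by simp
  qed
  then have "(\<integral>\<^sup>+t\<in>{a<..<b}. f t \<partial>lborel) \<le> (\<integral>\<^sup>+t. (SUP k. f t * indicator {c k..b} t) \<partial>lborel)"
    by (intro nn_integral_mono)
  also have "\<dots> = (SUP k. \<integral>\<^sup>+t. f t * indicator {c k..b} t \<partial>lborel)"
  proof (rule nn_integral_monotone_convergence_SUP)
    show "incseq (\<lambda>k t. f t * indicator {c k..b} t)"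
      using c_antimono by (intro incseq_SucI le_funI) (auto simp: indicator_def intro: order_trans)
  qed measurable
  also have "\<dots> \<le> (SUP c\<in>{a<..b}. \<integral>\<^sup>+t\<in>{c..b}. f t \<partial>lborel)"
    using c by (intro SUP_least SUP_upper) auto
  finally show ?thesis .
qed

lemma nn_integral_Ioo_le_antiderivative:
  fixes f F :: "real \<Rightarrow> real"
  assumes "a < b" and f[measurable]: "f \<in> borel_measurable borel"
    and F': "\<And>t. a < t \<Longrightarrow> t \<le> b \<Longrightarrow> (F has_real_derivative f t) (at t)"
    and f_nonneg: "\<And>t. a < t \<Longrightarrow> t \<le> b \<Longrightarrow> 0 \<le> f t"
    and F_nonneg: "\<And>t. a < t \<Longrightarrow> t \<le> b \<Longrightarrow> 0 \<le> F t"
  shows "(\<integral>\<^sup>+t\<in>{a<..<b}. ennreal (f t) \<partial>lborel) \<le> ennreal (F b)"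
proof -
  have "(\<integral>\<^sup>+t\<in>{a<..<b}. ennreal (f t) \<partial>lborel) \<le> (SUP c\<in>{a<..b}. \<integral>\<^sup>+t\<in>{c..b}. ennreal (f t) \<partial>lborel)"
    using \<open>a < b\<close> by (intro nn_integral_Ioo_le_SUP_Icc) measurable
  also have "\<dots> \<le> ennreal (F b)"
  proof (rule SUP_least)
    fix c
    assume c: "c \<in> {a<..b}"
    then have "(\<integral>\<^sup>+t\<in>{c..b}. ennreal (f t) \<partial>lborel) = ennreal (F b - F c)"
      by (intro nn_integral_FTC_Icc F' f_nonneg) auto
    also have "\<dots> \<le> ennreal (F b)"
      using F_nonneg[of c] c by (intro ennreal_leI) simp
    finally show "(\<integral>\<^sup>+t\<in>{c..b}. ennreal (f t) \<partial>lborel) \<le> ennreal (F b)" .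
  qed
  finally show ?thesis .
qed

lemma continuous_on_dominated_dist:
  fixes g :: "'a::metric_space \<Rightarrow> 'b::metric_space" and h :: "'a \<Rightarrow> 'c::metric_space"
  assumes h: "continuous_on UNIV h" and dominated: "\<And>x y. dist (g x) (g y) \<le> dist (h x) (h y)"
  shows "continuous_on UNIV g"
  unfolding continuous_on_iff
proof (intro ballI allI impI)
  fix x and e :: real
  assume "0 < e"
  then obtain d where "0 < d" "\<And>y. dist y x < d \<Longrightarrow> dist (h y) (h x) < e"
    using h unfolding continuous_on_iff by blast
  then show "\<exists>d>0. \<forall>y\<in>UNIV. dist y x < d \<longrightarrow> dist (g y) (g x) < e"
    by (intro exI[of _ d]) (auto intro: le_less_trans[OF dominated])
qed

text \<open>The measure of \<open>A \<inter> cball 0 r\<close> grows no faster than that of \<open>cball 0 r\<close>.\<close>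
lemma continuous_on_measure_Int_cball:
  fixes A :: "'a::euclidean_space set"
  assumes A: "A \<in> sets lebesgue"
  shows "continuous_on UNIV (\<lambda>r. measure lebesgue (A \<inter> cball 0 r))"
proof -
  define g where "g r = measure lebesgue (A \<inter> cball 0 r)" for r
  define h where "h r = measure lebesgue (cball (0::'a) r)" for r
  have cball: "cball (0::'a) r \<in> fmeasurable lebesgue" for r
    by simp
  have A_cball: "A \<inter> cball 0 r \<in> fmeasurable lebesgue" for r
    by (rule fmeasurableI2[OF cball]) (auto intro: A)
  have h_eq: "h r = unit_ball_vol (DIM('a)) * max r 0 ^ DIM('a)" for r
    by (cases "0 \<le> r") (auto simp: h_def content_cball max_def)
  have increment: "g r' - g r \<le> h r' - h r" "g r \<le> g r'" "h r \<le> h r'" if "r \<le> r'" for r r'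
  proof -
    have sub: "A \<inter> cball 0 r \<subseteq> A \<inter> cball 0 r'" "cball (0::'a) r \<subseteq> cball 0 r'"
      using that by auto
    have "g r' - g r = measure lebesgue (A \<inter> cball 0 r' - A \<inter> cball 0 r)"
      unfolding g_def using measurable_measure_Diff[OF A_cball fmeasurableD[OF A_cball] sub(1)] by simp
    also have "\<dots> \<le> measure lebesgue (cball (0::'a) r' - cball 0 r)"
      by (rule measure_mono_fmeasurable) (use A_cball cball in auto)
    also have "\<dots> = h r' - h r"
      unfolding h_def using measurable_measure_Diff[OF cball fmeasurableD[OF cball] sub(2)] by simp
    finally show "g r' - g r \<le> h r' - h r" .
    show "g r \<le> g r'"
      unfolding g_def by (rule measure_mono_fmeasurable[OF sub(1) fmeasurableD[OF A_cball] A_cball])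
    show "h r \<le> h r'"
      unfolding h_def by (rule measure_mono_fmeasurable[OF sub(2) fmeasurableD[OF cball] cball])
  qed
  have "continuous_on UNIV h"
    unfolding h_eq by (intro continuous_intros)
  moreover have "dist (g x) (g y) \<le> dist (h x) (h y)" for x y
    using increment[of x y] increment[of y x] by (cases "x \<le> y") (auto simp: dist_real_def)
  ultimately show ?thesis
    unfolding g_def[symmetric] by (rule continuous_on_dominated_dist)
qed

lemma obtain_lebesgue_subset_emeasure_eq:
  fixes A :: "'a::euclidean_space set"
  assumes A: "A \<in> sets lebesgue" and s: "0 \<le> s" "ennreal s < emeasure lebesgue A"
  obtains E where "E \<in> sets lebesgue" "E \<subseteq> A" "emeasure lebesgue E = ennreal s"
proof -
  define g where "g r = measure lebesgue (A \<inter> cball 0 r)" for r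
  have A_cball: "A \<inter> cball 0 r \<in> fmeasurable lebesgue" for r
    by (rule fmeasurableI2[of "cball 0 r"]) (auto intro: A)
  have emeasure_eq: "emeasure lebesgue (A \<inter> cball 0 r) = ennreal (g r)" for r
    unfolding g_def by (rule emeasure_eq_ennreal_measure[OF fmeasurableD2[OF A_cball]])
  have "g 0 \<le> measure lebesgue (cball (0::'a) 0)"
    unfolding g_def by (rule measure_mono_fmeasurable[OF Int_lower2 fmeasurableD[OF A_cball] lmeasurable_cball])
  then have g0: "g 0 \<le> s"
    using s(1) by (simp add: content_cball)
  have "(SUP n. emeasure lebesgue (A \<inter> cball 0 (real n))) = emeasure lebesgue (\<Union>n. A \<inter> cball 0 (real n))"
    by (rule SUP_emeasure_incseq) (use A_cball in \<open>auto simp: incseq_def\<close>)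
  also have "(\<Union>n. A \<inter> cball 0 (real n)) = A"
    by (auto simp: real_arch_simple)
  finally have "ennreal s < (SUP n. ennreal (g (real n)))"
    using s(2) by (simp add: emeasure_eq)
  then obtain n :: nat where "ennreal s < ennreal (g (real n))"
    by (auto simp: less_SUP_iff)
  then have "s \<le> g (real n)"
    by (simp add: ennreal_less_iff s(1))
  moreover have "continuous_on {0..real n} g"
    using continuous_on_measure_Int_cball[OF A] unfolding g_def by (rule continuous_on_subset) simp
  ultimately obtain r where "g r = s"
    using IVT'[of g 0 s "real n"] g0 by auto
  show ?thesis
  proof (rule that)
    show "A \<inter> cball 0 r \<in> sets lebesgue"
      using A_cball by (rule fmeasurableD)
    show "emeasure lebesgue (A \<inter> cball 0 r) = ennreal s"
      using emeasure_eq \<open>g r = s\<close> by simp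
  qed auto
qed

lemma borel_measurable_L1_loc: "f \<in> L1_loc \<Longrightarrow> f \<in> borel_measurable lebesgue"
  unfolding L1_loc_def by simp

lemma L1_loc_integrable:
  fixes f :: "'a::euclidean_space \<Rightarrow> real"
  assumes "integrable lebesgue f"
  shows "f \<in> L1_loc"
  unfolding L1_loc_def set_integrable_def
  using assms integrable_mult_indicator[OF fmeasurableD[OF lmeasurable_compact] assms]
  by auto

lemma L1_loc_bounded:
  fixes f :: "'a::euclidean_space \<Rightarrow> real"
  assumes f[measurable]: "f \<in> borel_measurable lebesgue" and bound: "\<And>x. \<bar>f x\<bar> \<le> C"
  shows "f \<in> L1_loc"
  unfolding L1_loc_def
proof (intro CollectI conjI allI impI f)
  fix K :: "'a set"
  assume "compact K"
  then have "set_integrable lebesgue K (\<lambda>_. C)"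
    using lmeasurable_compact[of K] by (simp add: set_integrable_def lmeasurable_iff_integrable)
  moreover have [measurable]: "K \<in> sets lebesgue"
    using \<open>compact K\<close> by (simp add: fmeasurableD lmeasurable_compact)
  then have "set_borel_measurable lebesgue K f"
    unfolding set_borel_measurable_def by measurable
  ultimately show "set_integrable lebesgue K f"
    by (rule set_integrable_bound) (auto intro!: AE_I2 order_trans[OF bound abs_ge_self])
qed

section \<open>Distribution function and non-increasing rearrangement\<close>

abbreviation distribution_fun :: "('a::euclidean_space \<Rightarrow> real) \<Rightarrow> real \<Rightarrow> ennreal" where
  "distribution_fun f \<mu> \<equiv> emeasure lebesgue {x. \<mu> < \<bar>f x\<bar>}"

lemma sets_lebesgue_superlevel:
  fixes f :: "'a::euclidean_space \<Rightarrow> real"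
  assumes [measurable]: "f \<in> borel_measurable lebesgue"
  shows "{x. c < \<bar>f x\<bar>} \<in> sets lebesgue"
proof -
  have "{x \<in> space lebesgue. c < \<bar>f x\<bar>} \<in> sets lebesgue"
    by measurable
  then show ?thesis
    by simp
qed

lemma distribution_fun_eq_SUP:
  fixes f :: "'a::euclidean_space \<Rightarrow> real"
  assumes "f \<in> borel_measurable lebesgue"
  shows "distribution_fun f \<mu> = (SUP n. distribution_fun f (\<mu> + 1 / Suc n))"
proof -
  have "(SUP n. distribution_fun f (\<mu> + 1 / Suc n)) = emeasure lebesgue (\<Union>n. {x. \<mu> + 1 / Suc n < \<bar>f x\<bar>})"
  proof (rule SUP_emeasure_incseq)
    show "range (\<lambda>n. {x. \<mu> + 1 / Suc n < \<bar>f x\<bar>}) \<subseteq> sets lebesgue"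
      using sets_lebesgue_superlevel[OF assms] by auto
    have "1 / real (Suc n) \<le> 1 / Suc m" if "m \<le> n" for m n
      using that by (simp add: frac_le)
    then show "incseq (\<lambda>n. {x. \<mu> + 1 / Suc n < \<bar>f x\<bar>})"
      unfolding incseq_def by (smt (verit) Collect_mono)
  qed
  also have "(\<Union>n. {x. \<mu> + 1 / Suc n < \<bar>f x\<bar>}) = {x. \<mu> < \<bar>f x\<bar>}"
  proof (intro set_eqI iffI)
    fix x assume "x \<in> {x. \<mu> < \<bar>f x\<bar>}"
    then obtain n :: nat where "1 / Suc n < \<bar>f x\<bar> - \<mu>"
      using nat_approx_posE[of "\<bar>f x\<bar> - \<mu>"] by auto
    then have "\<mu> + 1 / Suc n < \<bar>f x\<bar>"
      by simp
    then show "x \<in> (\<Union>n. {x. \<mu> + 1 / Suc n < \<bar>f x\<bar>})"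
      by blast
  next
    fix x assume "x \<in> (\<Union>n. {x. \<mu> + 1 / Suc n < \<bar>f x\<bar>})"
    then obtain n :: nat where "\<mu> + 1 / Suc n < \<bar>f x\<bar>"
      by blast
    moreover have "0 < 1 / real (Suc n)"
      by simp
    ultimately show "x \<in> {x. \<mu> < \<bar>f x\<bar>}"
      by (smt (verit) mem_Collect_eq)
  qed
  finally show ?thesis ..
qed

lemma rearr_le_of_distribution_fun_le:
  assumes "0 < \<mu>" "distribution_fun f \<mu> \<le> ennreal t"
  shows "rearr f t \<le> ennreal \<mu>"
  unfolding rearr_def using assms by (intro Inf_lower) auto

lemma distribution_fun_le_of_rearr_less:
  fixes f :: "'a::euclidean_space \<Rightarrow> real"
  assumes "f \<in> borel_measurable lebesgue" "rearr f t < ennreal \<mu>"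
  shows "distribution_fun f \<mu> \<le> ennreal t"
proof -
  obtain y where y: "y \<in> {ennreal \<tau> | \<tau>. 0 < \<tau> \<and> distribution_fun f \<tau> \<le> ennreal t}" "y < ennreal \<mu>"
    using assms(2) unfolding rearr_def by (auto simp: Inf_less_iff)
  then obtain \<tau> where \<tau>: "\<tau> < \<mu>" "distribution_fun f \<tau> \<le> ennreal t"
    by (auto simp: ennreal_less_iff)
  have "distribution_fun f \<mu> \<le> distribution_fun f \<tau>"
    using \<tau>(1) by (intro emeasure_mono sets_lebesgue_superlevel assms(1)) auto
  with \<tau>(2) show ?thesis
    by (rule order_trans[rotated])
qed

lemma distribution_fun_le_of_rearr_le:
  fixes f :: "'a::euclidean_space \<Rightarrow> real"
  assumes f: "f \<in> borel_measurable lebesgue" and "0 \<le> \<mu>" "rearr f t \<le> ennreal \<mu>"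
  shows "distribution_fun f \<mu> \<le> ennreal t"
proof -
  have "distribution_fun f (\<mu> + 1 / Suc n) \<le> ennreal t" for n
  proof (rule distribution_fun_le_of_rearr_less[OF f])
    have "ennreal \<mu> < ennreal (\<mu> + 1 / Suc n)"
      using assms(2) by (simp add: ennreal_lessI)
    with assms(3) show "rearr f t < ennreal (\<mu> + 1 / Suc n)"
      by (rule le_less_trans)
  qed
  then show ?thesis
    by (subst distribution_fun_eq_SUP[OF f]) (rule SUP_least)
qed

lemma rearr_antimono: "antimono (rearr f)"
proof (rule antimonoI)
  fix t t' :: real
  assume "t \<le> t'"
  then have "ennreal t \<le> ennreal t'"
    by (rule ennreal_leI)
  then show "rearr f t' \<le> rearr f t"
    unfolding rearr_def by (intro Inf_superset_mono) (auto intro: order_trans)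
qed

lemma borel_measurable_rearr [measurable]: "rearr f \<in> borel_measurable borel"
  by (rule borel_measurable_antimono_ennreal[OF rearr_antimono])

lemma borel_measurable_rearr_powr:
  "0 \<le> p \<Longrightarrow> (\<lambda>t. enn_powr (rearr f t) p) \<in> borel_measurable borel"
  by (intro borel_measurable_antimono_ennreal)
    (auto simp: antimono_def intro: enn_powr_mono rearr_antimono[THEN antimonoD])

lemma emeasure_superlevel_le_rearr_superlevel:
  fixes f :: "'a::euclidean_space \<Rightarrow> real"
  assumes f: "f \<in> borel_measurable lebesgue" and "0 \<le> \<mu>" "0 \<le> s"
    and E: "E \<in> sets lebesgue" "emeasure lebesgue E \<le> ennreal s"
  shows "emeasure lebesgue (E \<inter> {x. \<mu> < \<bar>f x\<bar>})
           \<le> emeasure lborel {t. 0 < t \<and> t < s \<and> ennreal \<mu> < rearr f t}"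
proof -
  let ?D = "distribution_fun f \<mu>"
  have "{t. 0 < t \<and> t < s \<and> ennreal t < ?D} \<subseteq> {t. 0 < t \<and> t < s \<and> ennreal \<mu> < rearr f t}"
    using distribution_fun_le_of_rearr_le[OF f \<open>0 \<le> \<mu>\<close>] by (auto simp: not_le[symmetric])
  then have mono: "emeasure lborel {t. 0 < t \<and> t < s \<and> ennreal t < ?D}
      \<le> emeasure lborel {t. 0 < t \<and> t < s \<and> ennreal \<mu> < rearr f t}"
    by (rule emeasure_mono) measurable
  have "emeasure lebesgue (E \<inter> {x. \<mu> < \<bar>f x\<bar>}) \<le> emeasure lborel {t. 0 < t \<and> t < s \<and> ennreal t < ?D}"
  proof (cases "ennreal s \<le> ?D")
    case True
    have "ennreal t < ?D" if "0 < t" "t < s" for t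
      using ennreal_lessI[of s t] that True by simp
    then have "{t. 0 < t \<and> t < s \<and> ennreal t < ?D} = {0<..<s}"
      by auto
    moreover have "emeasure lebesgue (E \<inter> {x. \<mu> < \<bar>f x\<bar>}) \<le> emeasure lebesgue E"
      by (rule emeasure_mono[OF Int_lower1 E(1)])
    ultimately show ?thesis
      using E(2) \<open>0 \<le> s\<close> by simp
  next
    case False
    then obtain d where d: "?D = ennreal d" "0 \<le> d" "d < s"
      by (cases ?D) (auto simp: ennreal_less_iff not_le)
    then have "{t. 0 < t \<and> t < s \<and> ennreal t < ?D} = {0<..<d}"
      by (auto simp: ennreal_less_iff)
    moreover have "emeasure lebesgue (E \<inter> {x. \<mu> < \<bar>f x\<bar>}) \<le> ?D"
      by (rule emeasure_mono[OF Int_lower2 sets_lebesgue_superlevel[OF f]])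
    ultimately show ?thesis
      using d by simp
  qed
  then show ?thesis
    using mono by (rule order_trans)
qed

text \<open>The Hardy--Littlewood inequality: by the layer-cake formula on both sides it reduces to the
  comparison of superlevel sets above.\<close>
lemma set_nn_integral_powr_le_rearr:
  fixes f :: "'a::euclidean_space \<Rightarrow> real"
  assumes f[measurable]: "f \<in> borel_measurable lebesgue" and p: "0 < p" and "0 \<le> s"
    and E[measurable]: "E \<in> sets lebesgue" "emeasure lebesgue E \<le> ennreal s"
  shows "(\<integral>\<^sup>+x\<in>E. ennreal (\<bar>f x\<bar> powr p) \<partial>lebesgue)
           \<le> (\<integral>\<^sup>+t\<in>{0<..<s}. enn_powr (rearr f t) p \<partial>lborel)"
proof -
  let ?g = "\<lambda>x. ennreal (\<bar>f x\<bar> powr p) * indicator E x"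
  let ?F = "\<lambda>t. enn_powr (rearr f t) p * indicator {0<..<s} t"
  have [measurable]: "(\<lambda>t. enn_powr (rearr f t) p) \<in> borel_measurable borel"
    by (rule borel_measurable_rearr_powr) (use p in simp)
  have level: "emeasure lebesgue {x\<in>space lebesgue. ennreal l < ?g x}
      \<le> emeasure lborel {t\<in>space lborel. ennreal l < ?F t}" if l: "0 \<le> l" for l
  proof -
    have "{x\<in>space lebesgue. ennreal l < ?g x} = E \<inter> {x. l powr (1 / p) < \<bar>f x\<bar>}"
      using l p by (auto simp: indicator_def ennreal_less_iff less_powr_iff)
    moreover have "{t. 0 < t \<and> t < s \<and> ennreal (l powr (1 / p)) < rearr f t}
        \<subseteq> {t\<in>space lborel. ennreal l < ?F t}"
      using l p by (auto simp: ennreal_less_enn_powr)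
    then have "emeasure lborel {t. 0 < t \<and> t < s \<and> ennreal (l powr (1 / p)) < rearr f t}
        \<le> emeasure lborel {t\<in>space lborel. ennreal l < ?F t}"
      by (rule emeasure_mono) measurable
    ultimately show ?thesis
      using emeasure_superlevel_le_rearr_superlevel[OF f _ \<open>0 \<le> s\<close> E, of "l powr (1 / p)"]
      by (simp add: order_trans)
  qed
  have "(\<integral>\<^sup>+x. ?g x \<partial>lebesgue)
      = (\<integral>\<^sup>+l\<in>{0..}. emeasure lebesgue {x\<in>space lebesgue. ennreal l < ?g x} \<partial>lborel)"
    by (rule nn_integral_layer_cake[OF sigma_finite_lebesgue]) measurable
  also have "\<dots> \<le> (\<integral>\<^sup>+l\<in>{0..}. emeasure lborel {t\<in>space lborel. ennreal l < ?F t} \<partial>lborel)"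
  proof (rule nn_integral_mono)
    fix l :: real
    show "emeasure lebesgue {x\<in>space lebesgue. ennreal l < ?g x} * indicator {0..} l
        \<le> emeasure lborel {t\<in>space lborel. ennreal l < ?F t} * indicator {0..} l"
      using level[of l] by (cases "0 \<le> l") simp_all
  qed
  also have "\<dots> = (\<integral>\<^sup>+t. ?F t \<partial>lborel)"
    by (rule nn_integral_layer_cake[OF sigma_finite_lborel, symmetric]) measurable
  finally show ?thesis .
qed

abbreviation sup_set_nn_integral :: "('a::euclidean_space \<Rightarrow> real) \<Rightarrow> real \<Rightarrow> real \<Rightarrow> ennreal" where
  "sup_set_nn_integral f q s \<equiv> (SUP E \<in> {E \<in> sets lebesgue. emeasure lebesgue E = ennreal s}.
     \<integral>\<^sup>+ x \<in> E. ennreal (\<bar>f x\<bar> powr q) \<partial>lebesgue)"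

lemma sup_set_nn_integral_le_rearr:
  fixes f :: "'a::euclidean_space \<Rightarrow> real"
  assumes "f \<in> borel_measurable lebesgue" "0 < q" "0 \<le> s"
  shows "sup_set_nn_integral f q s \<le> (\<integral>\<^sup>+t\<in>{0<..<s}. enn_powr (rearr f t) q \<partial>lborel)"
  using assms by (intro SUP_least set_nn_integral_powr_le_rearr) auto

text \<open>Lebesgue measure has no atoms, so the superlevel set \<open>{|f| > l}\<close>, whose measure exceeds \<open>s\<close>,
  contains a set of measure exactly \<open>s\<close>.\<close>
lemma ennreal_mult_powr_le_sup_set_nn_integral:
  fixes f :: "'a::euclidean_space \<Rightarrow> real"
  assumes f: "f \<in> borel_measurable lebesgue" and q: "0 < q" and s: "0 < s"
    and l: "0 < l" "ennreal l < rearr f s"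
  shows "ennreal (s * l powr q) \<le> sup_set_nn_integral f q s"
proof -
  have "ennreal s < distribution_fun f l"
    using rearr_le_of_distribution_fun_le[OF l(1), of f s] l(2) by (meson leD not_le)
  then obtain E where E: "E \<in> sets lebesgue" "E \<subseteq> {x. l < \<bar>f x\<bar>}" "emeasure lebesgue E = ennreal s"
    using obtain_lebesgue_subset_emeasure_eq[OF sets_lebesgue_superlevel[OF f]] s by (metis less_imp_le)
  have "ennreal (s * l powr q) = ennreal (l powr q) * emeasure lebesgue E"
    using E(3) s by (simp add: ennreal_mult mult.commute)
  also have "\<dots> = (\<integral>\<^sup>+x. ennreal (l powr q) * indicator E x \<partial>lebesgue)"
    by (rule nn_integral_cmult_indicator[symmetric, OF E(1)])
  also have "\<dots> \<le> (\<integral>\<^sup>+x\<in>E. ennreal (\<bar>f x\<bar> powr q) \<partial>lebesgue)"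
  proof (rule nn_integral_mono)
    fix x
    have "l powr q \<le> \<bar>f x\<bar> powr q" if "x \<in> E"
      using that E(2) l q by (intro powr_mono2) auto
    then show "ennreal (l powr q) * indicator E x \<le> ennreal (\<bar>f x\<bar> powr q) * indicator E x"
      by (simp add: indicator_def ennreal_leI)
  qed
  also have "\<dots> \<le> sup_set_nn_integral f q s"
    by (rule SUP_upper) (use E in auto)
  finally show ?thesis .
qed

lemma ennreal_mult_rearr_powr_le_sup_set_nn_integral:
  fixes f :: "'a::euclidean_space \<Rightarrow> real"
  assumes f: "f \<in> borel_measurable lebesgue" and q: "0 < q" and s: "0 < s"
  shows "ennreal s * enn_powr (rearr f s) q \<le> sup_set_nn_integral f q s"
proof (rule dense_le)
  fix y
  assume y: "y < ennreal s * enn_powr (rearr f s) q"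
  then obtain c where c: "y = ennreal c" "0 \<le> c"
    by (cases y) auto
  have "ennreal ((c / s) powr (1 / q)) < rearr f s"
  proof (cases "rearr f s")
    case (real m)
    with y c s have "c / s < m powr q"
      by (simp add: ennreal_mult[symmetric] ennreal_less_iff field_simps)
    with real c s q show ?thesis
      by (simp add: ennreal_less_iff less_powr_iff[symmetric])
  qed simp
  then obtain l where l: "ennreal ((c / s) powr (1 / q)) < ennreal l" "ennreal l < rearr f s" "0 \<le> l"
    by (metis dense ennreal_cases less_imp_le top.not_eq_extremum top_unique)
  then have "(c / s) powr (1 / q) < l"
    by (simp add: ennreal_less_iff)
  moreover have "0 \<le> (c / s) powr (1 / q)"
    by simp
  ultimately have "(c / s) powr (1 / q) < l" "0 < l"
    by linarith+
  then have "c \<le> s * l powr q"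
    using c s q by (simp add: less_powr_iff[symmetric] field_simps)
  then have "y \<le> ennreal (s * l powr q)"
    using c by (simp add: ennreal_leI)
  also have "\<dots> \<le> sup_set_nn_integral f q s"
    using ennreal_mult_powr_le_sup_set_nn_integral[OF f q s \<open>0 < l\<close> l(2)] .
  finally show "y \<le> sup_set_nn_integral f q s" .
qed

section \<open>Comparison of the norms\<close>

lemma one_le_ln_exp1_plus:
  fixes u :: real
  assumes "0 \<le> u"
  shows "1 \<le> ln (exp 1 + u)"
proof -
  have "ln (exp 1) \<le> ln (exp 1 + u)"
    using assms by (subst ln_le_cancel_iff) (auto intro: add_pos_nonneg)
  then show ?thesis
    by simp
qed

lemma logw_ge_1: "0 < s \<Longrightarrow> 0 \<le> \<alpha> \<Longrightarrow> 1 \<le> logw \<alpha> s"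
  unfolding logw_def by (intro ge_one_powr_ge_zero one_le_ln_exp1_plus) auto

lemma logw_nonneg: "0 < s \<Longrightarrow> 0 \<le> \<alpha> \<Longrightarrow> 0 \<le> logw \<alpha> s"
  using logw_ge_1[of s \<alpha>] by linarith

lemma logw_antimono:
  assumes "0 < t" "t \<le> s" "0 \<le> \<alpha>"
  shows "logw \<alpha> s \<le> logw \<alpha> t"
  unfolding logw_def
proof (rule powr_mono2)
  have "1 / s \<le> 1 / t"
    using assms by (simp add: frac_le)
  then show "ln (exp 1 + 1 / s) \<le> ln (exp 1 + 1 / t)"
    using assms by (subst ln_le_cancel_iff) (auto intro: add_pos_nonneg)
  show "0 \<le> ln (exp 1 + 1 / s)"
    using one_le_ln_exp1_plus[of "1 / s"] assms by simp
qed (use assms in auto)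

lemma frak_LqlogL_norm_le_LqlogL_norm:
  fixes f :: "'a::euclidean_space \<Rightarrow> real"
  assumes f: "f \<in> borel_measurable lebesgue" and q: "0 < q" and \<alpha>: "0 \<le> \<alpha>"
  shows "frak_LqlogL_norm q \<alpha> f \<le> LqlogL_norm q \<alpha> f"
  unfolding frak_LqlogL_norm_def LqlogL_norm_def
proof (rule SUP_least)
  fix s :: real
  assume "s \<in> {0<..}"
  then have s: "0 < s"
    by simp
  have [measurable]: "(\<lambda>t. enn_powr (rearr f t) q) \<in> borel_measurable borel"
    by (rule borel_measurable_rearr_powr) (use q in simp)
  have "ennreal (logw \<alpha> s) * sup_set_nn_integral f q s
      \<le> ennreal (logw \<alpha> s) * (\<integral>\<^sup>+t\<in>{0<..<s}. enn_powr (rearr f t) q \<partial>lborel)"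
    using sup_set_nn_integral_le_rearr[OF f q] s by (intro mult_left_mono) auto
  also have "\<dots> = (\<integral>\<^sup>+t. ennreal (logw \<alpha> s) * (enn_powr (rearr f t) q * indicator {0<..<s} t) \<partial>lborel)"
    by (rule nn_integral_cmult[symmetric]) measurable
  also have "\<dots> \<le> (\<integral>\<^sup>+t\<in>{0<..}. ennreal (logw \<alpha> t) * enn_powr (rearr f t) q \<partial>lborel)"
  proof (rule nn_integral_mono)
    fix t :: real
    have "ennreal (logw \<alpha> s) \<le> ennreal (logw \<alpha> t)" if "0 < t" "t < s"
      using that \<alpha> by (intro ennreal_leI logw_antimono) auto
    then show "ennreal (logw \<alpha> s) * (enn_powr (rearr f t) q * indicator {0<..<s} t)
        \<le> ennreal (logw \<alpha> t) * enn_powr (rearr f t) q * indicator {0<..} t"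
      by (auto simp: indicator_def intro: mult_right_mono)
  qed
  finally show "enn_powr (ennreal (logw \<alpha> s) * sup_set_nn_integral f q s) (1 / q)
      \<le> enn_powr (\<integral>\<^sup>+t\<in>{0<..}. ennreal (logw \<alpha> t) * enn_powr (rearr f t) q \<partial>lborel) (1 / q)"
    by (rule enn_powr_mono) (use q in simp)
qed

lemma weak_LqlogL_norm_le_frak_LqlogL_norm:
  fixes f :: "'a::euclidean_space \<Rightarrow> real"
  assumes f: "f \<in> borel_measurable lebesgue" and q: "0 < q" and \<alpha>: "0 \<le> \<alpha>"
  shows "weak_LqlogL_norm q \<alpha> f \<le> frak_LqlogL_norm q \<alpha> f"
  unfolding frak_LqlogL_norm_def weak_LqlogL_norm_def
proof (rule SUP_mono)
  fix s :: real
  assume s: "s \<in> {0<..}"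
  have "ennreal (logw \<alpha> s * s) * enn_powr (rearr f s) q
      = ennreal (logw \<alpha> s) * (ennreal s * enn_powr (rearr f s) q)"
    using s logw_nonneg[of s \<alpha>] \<alpha> by (simp add: ennreal_mult mult.assoc)
  also have "\<dots> \<le> ennreal (logw \<alpha> s) * sup_set_nn_integral f q s"
    using ennreal_mult_rearr_powr_le_sup_set_nn_integral[OF f q] s by (intro mult_left_mono) auto
  finally have "enn_powr (ennreal (logw \<alpha> s * s) * enn_powr (rearr f s) q) (1 / q)
      \<le> enn_powr (ennreal (logw \<alpha> s) * sup_set_nn_integral f q s) (1 / q)"
    by (rule enn_powr_mono) (use q in simp)
  with s show "\<exists>s'\<in>{0<..}. enn_powr (ennreal (logw \<alpha> s * s) * enn_powr (rearr f s) q) (1 / q)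
      \<le> enn_powr (ennreal (logw \<alpha> s') * sup_set_nn_integral f q s') (1 / q)"
    by blast
qed

lemma LqlogL_subset_frak_LqlogL:
  assumes "0 < q" "0 \<le> \<alpha>"
  shows "(LqlogL q \<alpha> :: ('a::euclidean_space \<Rightarrow> real) set) \<subseteq> frak_LqlogL q \<alpha>"
  using frak_LqlogL_norm_le_LqlogL_norm[OF borel_measurable_L1_loc assms]
  unfolding LqlogL_def frak_LqlogL_def by (auto intro: le_less_trans)

lemma frak_LqlogL_subset_weak_LqlogL:
  assumes "0 < q" "0 \<le> \<alpha>"
  shows "(frak_LqlogL q \<alpha> :: ('a::euclidean_space \<Rightarrow> real) set) \<subseteq> weak_LqlogL q \<alpha>"
  using weak_LqlogL_norm_le_frak_LqlogL_norm[OF borel_measurable_L1_loc assms]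
  unfolding frak_LqlogL_def weak_LqlogL_def by (auto intro: le_less_trans)

section \<open>Radial functions\<close>

text \<open>It maps Lebesgue measure to
  Lebesgue measure on \<open>[0, \<infinity>)\<close>, so \<open>\<phi> \<circ> ball_vol\<close> has rearrangement \<open>\<phi>\<close> when \<open>\<phi>\<close> is
  non-increasing and right-continuous.\<close>
definition ball_vol :: "'a::euclidean_space \<Rightarrow> real" where
  "ball_vol x = unit_ball_vol (DIM('a)) * norm x ^ DIM('a)"

lemma ball_vol_nonneg: "0 \<le> ball_vol x"
  unfolding ball_vol_def by simp

lemma borel_measurable_ball_vol [measurable]: "ball_vol \<in> borel_measurable borel"
  unfolding ball_vol_def by measurable

lemma lebesgue_measurable_ball_vol [measurable]:
  "(ball_vol :: 'a::euclidean_space \<Rightarrow> real) \<in> borel_measurable lebesgue"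
  using measurable_completion[of ball_vol lborel borel] by simp

lemma ball_vol_less_eq_ball:
  assumes c: "0 < c"
  shows "{x::'a::euclidean_space. ball_vol x < c} = ball 0 (root DIM('a) (c / unit_ball_vol (DIM('a))))"
proof -
  let ?n = "DIM('a)" and ?w = "unit_ball_vol (DIM('a))"
  let ?r = "root ?n (c / ?w)"
  have r: "0 \<le> ?r" "?r ^ ?n = c / ?w"
    using c by (simp_all add: real_root_pow_pos2)
  have "0 < ?w"
    by simp
  then have "ball_vol x < c \<longleftrightarrow> norm x ^ ?n < ?r ^ ?n" for x :: 'a
    unfolding ball_vol_def r(2) by (simp add: pos_less_divide_eq mult.commute)
  also have "\<dots> x \<longleftrightarrow> norm x < ?r" for x :: 'a
    using r(1) by (meson DIM_positive norm_ge_zero power_less_imp_less_base power_strict_mono)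
  finally show ?thesis
    by (auto simp: dist_norm)
qed

lemma emeasure_ball_vol_less:
  "emeasure lebesgue {x::'a::euclidean_space. ball_vol x < c} = ennreal (max c 0)"
proof (cases "0 < c")
  case True
  let ?n = "DIM('a)" and ?w = "unit_ball_vol (DIM('a))"
  have "emeasure lebesgue {x::'a. ball_vol x < c} = emeasure lborel (ball (0::'a) (root ?n (c / ?w)))"
    unfolding ball_vol_less_eq_ball[OF True] by simp
  also have "\<dots> = ennreal (?w * root ?n (c / ?w) ^ ?n)"
    using True by (intro emeasure_ball) simp
  moreover have "0 < ?w"
    by simp
  ultimately show ?thesis
    using True by (simp add: real_root_pow_pos2)
next
  case False
  then have "{x::'a. ball_vol x < c} = {}"
    using ball_vol_nonneg by (auto simp: not_less intro: order_trans)
  with False show ?thesis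
    by simp
qed

lemma emeasure_ball_vol_Ico:
  "emeasure lebesgue {x::'a::euclidean_space. a \<le> ball_vol x \<and> ball_vol x < b}
     = ennreal (max b 0 - max a 0)"
proof (cases "a \<le> b")
  case True
  have sets: "{x::'a. ball_vol x < c} \<in> sets lebesgue" for c
  proof -
    have "{x \<in> space lebesgue. ball_vol (x::'a) < c} \<in> sets lebesgue"
      by measurable
    then show ?thesis
      by simp
  qed
  have "{x::'a. a \<le> ball_vol x \<and> ball_vol x < b} = {x. ball_vol x < b} - {x. ball_vol x < a}"
    by auto
  also have "emeasure lebesgue \<dots> = emeasure lebesgue {x::'a. ball_vol x < b} - emeasure lebesgue {x::'a. ball_vol x < a}"
    using True by (intro emeasure_Diff sets) (auto simp: emeasure_ball_vol_less)
  finally show ?thesis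
    by (simp add: emeasure_ball_vol_less ennreal_minus)
next
  case False
  then have "{x::'a. a \<le> ball_vol x \<and> ball_vol x < b} = {}"
    by auto
  moreover have "max b 0 - max a 0 \<le> 0"
    using False by auto
  ultimately show ?thesis
    by (metis emeasure_empty ennreal_eq_0_iff)
qed

lemma emeasure_density_Ici_Ico:
  fixes a b :: real
  shows "emeasure (density lborel (indicator {0..})) {a..<b} = ennreal (max b 0 - max a 0)"
proof -
  have "emeasure (density lborel (indicator {0..})) {a..<b}
      = (\<integral>\<^sup>+x. indicator {0..} x * indicator {a..<b} x \<partial>lborel)"
    by (rule emeasure_density) auto
  also have "\<dots> = (\<integral>\<^sup>+x. indicator {max a 0..<b} x \<partial>lborel)"
    by (rule nn_integral_cong) (auto simp: indicator_def)
  also have "\<dots> = emeasure lborel {max a 0..<b}"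
    by simp
  also have "\<dots> = ennreal (max b 0 - max a 0)"
  proof (cases "max a 0 \<le> b")
    case False
    then have "{max a 0..<b} = {}"
      by auto
    moreover have "max b 0 - max a 0 \<le> 0"
      using False by auto
    ultimately show ?thesis
      by (metis emeasure_empty ennreal_eq_0_iff)
  next
    case True
    then have "max b 0 = b"
      by linarith
    with True show ?thesis
      by simp
  qed
  finally show ?thesis .
qed

lemma emeasure_distr_ball_vol_Ico:
  "emeasure (distr lebesgue borel (ball_vol :: 'a::euclidean_space \<Rightarrow> real)) {a..<b}
     = ennreal (max b 0 - max a 0)"
proof -
  have "(ball_vol :: 'a \<Rightarrow> real) -` {a..<b} \<inter> space lebesgue = {x. a \<le> ball_vol x \<and> ball_vol x < b}"
    by auto
  then show ?thesis
    by (simp add: emeasure_distr emeasure_ball_vol_Ico)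
qed

lemma distr_ball_vol:
  "distr lebesgue borel (ball_vol :: 'a::euclidean_space \<Rightarrow> real) = density lborel (indicator {0..})"
proof (rule measure_eqI_generator_eq_countable[where E = "range (\<lambda>(a, b). {a..<b::real})"
      and \<Omega> = UNIV and A = "range (\<lambda>n::nat. {-real n..<real n})"])
  have sets: "sets (borel :: real measure) = sigma_sets UNIV (range (\<lambda>(a, b). {a..<b::real}))"
    by (metis borel_eq_atLeastLessThan sets_measure_of top.extremum Pow_UNIV)
  show "Int_stable (range (\<lambda>(a, b). {a..<b::real}))"
  proof (rule Int_stableI)
    fix X Y
    assume "X \<in> range (\<lambda>(a, b). {a..<b::real})" "Y \<in> range (\<lambda>(a, b). {a..<b::real})"
    then obtain a b c d where "X = {a..<b}" "Y = {c..<d}"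
      by auto
    then have "X \<inter> Y = {max a c..<min b d}"
      by auto
    then show "X \<inter> Y \<in> range (\<lambda>(a, b). {a..<b::real})"
      by (auto intro!: image_eqI[where x = "(max a c, min b d)"])
  qed
  show "sets (distr lebesgue borel (ball_vol :: 'a \<Rightarrow> real)) = sigma_sets UNIV (range (\<lambda>(a, b). {a..<b}))"
    "sets (density lborel (indicator {0..})) = sigma_sets UNIV (range (\<lambda>(a, b). {a..<b::real}))"
    using sets by simp_all
  show "\<Union> (range (\<lambda>n::nat. {-real n..<real n})) = UNIV"
  proof (intro set_eqI iffI)
    fix x :: real
    obtain n :: nat where "\<bar>x\<bar> < real n"
      using reals_Archimedean2 by blast
    then have "x \<in> {-real n..<real n}"
      by auto
    then show "x \<in> \<Union> (range (\<lambda>n::nat. {-real n..<real n}))"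
      by blast
  qed auto
  show "emeasure (distr lebesgue borel (ball_vol :: 'a \<Rightarrow> real)) X \<noteq> \<infinity>"
    if "X \<in> range (\<lambda>n::nat. {-real n..<real n})" for X
    using that by (auto simp: emeasure_distr_ball_vol_Ico simp del: emeasure_distr)
  show "emeasure (distr lebesgue borel (ball_vol :: 'a \<Rightarrow> real)) X = emeasure (density lborel (indicator {0..})) X"
    if "X \<in> range (\<lambda>(a, b). {a..<b::real})" for X
    using that by (auto simp: emeasure_distr_ball_vol_Ico emeasure_density_Ici_Ico simp del: emeasure_distr)
  show "range (\<lambda>(a, b). {a..<b::real}) \<subseteq> Pow UNIV" "countable (range (\<lambda>n::nat. {-real n..<real n}))"
    by simp_all
  show "range (\<lambda>n::nat. {-real n..<real n}) \<subseteq> range (\<lambda>(a, b). {a..<b::real})"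
  proof (rule image_subsetI)
    fix n :: nat
    show "{-real n..<real n} \<in> range (\<lambda>(a, b). {a..<b::real})"
      by (rule image_eqI[where x = "(- real n, real n)"]) simp_all
  qed
qed

lemma nn_integral_ball_vol:
  assumes [measurable]: "g \<in> borel_measurable borel"
  shows "(\<integral>\<^sup>+x. g (ball_vol (x::'a::euclidean_space)) \<partial>lebesgue) = (\<integral>\<^sup>+t\<in>{0..}. g t \<partial>lborel)"
proof -
  have "(\<integral>\<^sup>+x. g (ball_vol (x::'a)) \<partial>lebesgue) = (\<integral>\<^sup>+t. g t \<partial>distr lebesgue borel (ball_vol :: 'a \<Rightarrow> real))"
    by (rule nn_integral_distr[symmetric]) auto
  also have "\<dots> = (\<integral>\<^sup>+t. indicator {0..} t * g t \<partial>lborel)"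
    unfolding distr_ball_vol by (rule nn_integral_density) auto
  finally show ?thesis
    by (simp add: mult.commute)
qed

lemma emeasure_ball_vol_preimage:
  assumes B: "B \<in> sets borel"
  shows "emeasure lebesgue {x::'a::euclidean_space. ball_vol x \<in> B} = emeasure lborel (B \<inter> {0..})"
proof -
  have "emeasure lebesgue {x::'a. ball_vol x \<in> B} = emeasure (distr lebesgue borel (ball_vol :: 'a \<Rightarrow> real)) B"
    using B by (subst emeasure_distr) (auto simp: vimage_def)
  also have "\<dots> = (\<integral>\<^sup>+x. indicator {0..} x * indicator B x \<partial>lborel)"
    unfolding distr_ball_vol using B by (intro emeasure_density) auto
  also have "\<dots> = (\<integral>\<^sup>+x. indicator (B \<inter> {0..}) x \<partial>lborel)"
    by (rule nn_integral_cong) (auto simp: indicator_def)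
  also have "\<dots> = emeasure lborel (B \<inter> {0..})"
    using B by simp
  finally show ?thesis .
qed

lemma distribution_fun_radial:
  assumes [measurable]: "\<phi> \<in> borel_measurable borel"
  shows "distribution_fun (\<lambda>x::'a::euclidean_space. \<phi> (ball_vol x)) \<mu>
           = emeasure lborel ({t. \<mu> < \<bar>\<phi> t\<bar>} \<inter> {0..})"
proof -
  have "{t \<in> space borel. \<mu> < \<bar>\<phi> t\<bar>} \<in> sets borel"
    by measurable
  then show ?thesis
    using emeasure_ball_vol_preimage[where 'a='a, of "{t. \<mu> < \<bar>\<phi> t\<bar>}"] by simp
qed

lemma rearr_radial_le:
  fixes \<phi> :: "real \<Rightarrow> real"
  assumes [measurable]: "\<phi> \<in> borel_measurable borel"
    and nonneg: "\<And>t. 0 < t \<Longrightarrow> 0 \<le> \<phi> t" and anti: "antimono_on {0<..} \<phi>" and t: "0 < t"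
  shows "rearr (\<lambda>x::'a::euclidean_space. \<phi> (ball_vol x)) t \<le> ennreal (\<phi> t)"
proof (rule ennreal_le_epsilon)
  fix e :: real
  assume e: "0 < e"
  have "{s. \<phi> t + e < \<bar>\<phi> s\<bar>} \<inter> {0..} \<subseteq> {0..<t}"
  proof (rule subsetI, rule ccontr)
    fix s
    assume s: "s \<in> {s. \<phi> t + e < \<bar>\<phi> s\<bar>} \<inter> {0..}" "s \<notin> {0..<t}"
    then have "t \<le> s"
      by auto
    then have "\<phi> s \<le> \<phi> t" "0 \<le> \<phi> s"
      using monotone_onD[OF anti, of t s] nonneg[of s] t by auto
    with s(1) e show False
      by auto
  qed
  then have "distribution_fun (\<lambda>x::'a. \<phi> (ball_vol x)) (\<phi> t + e) \<le> emeasure lborel {0..<t}"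
    unfolding distribution_fun_radial[OF assms(1)] by (rule emeasure_mono) simp
  then have "rearr (\<lambda>x::'a. \<phi> (ball_vol x)) t \<le> ennreal (\<phi> t + e)"
    using nonneg[OF t] e t by (intro rearr_le_of_distribution_fun_le) auto
  then show "rearr (\<lambda>x::'a. \<phi> (ball_vol x)) t \<le> ennreal (\<phi> t) + ennreal e"
    using nonneg[OF t] e by (simp add: ennreal_plus)
qed

lemma rearr_radial:
  fixes \<phi> :: "real \<Rightarrow> real"
  assumes \<phi>[measurable]: "\<phi> \<in> borel_measurable borel"
    and nonneg: "\<And>t. 0 < t \<Longrightarrow> 0 \<le> \<phi> t" and anti: "antimono_on {0<..} \<phi>"
    and cont: "\<And>t. 0 < t \<Longrightarrow> continuous (at_right t) \<phi>" and t: "0 < t"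
  shows "rearr (\<lambda>x::'a::euclidean_space. \<phi> (ball_vol x)) t = ennreal (\<phi> t)"
proof (rule antisym)
  show "rearr (\<lambda>x::'a. \<phi> (ball_vol x)) t \<le> ennreal (\<phi> t)"
    by (rule rearr_radial_le[OF \<phi> nonneg anti t])
  show "ennreal (\<phi> t) \<le> rearr (\<lambda>x::'a. \<phi> (ball_vol x)) t"
  proof (rule dense_le)
    fix y
    assume y: "y < ennreal (\<phi> t)"
    then obtain w where w: "y = ennreal w" "0 \<le> w" "w < \<phi> t"
      by (cases y) (auto simp: ennreal_less_iff)
    have "eventually (\<lambda>s. w < \<phi> s) (at_right t)"
      using cont[OF t] w(3) by (auto simp: continuous_within intro: order_tendstoD)
    then obtain t' where t': "t < t'" "w < \<phi> t'"
      by (metis eventually_at_right_field dense)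
    have "{0<..t'} \<subseteq> {s. w < \<bar>\<phi> s\<bar>} \<inter> {0..}"
      using monotone_onD[OF anti] t t' by force
    then have "emeasure lborel {0<..t'} \<le> distribution_fun (\<lambda>x::'a. \<phi> (ball_vol x)) w"
      unfolding distribution_fun_radial[OF \<phi>] by (rule emeasure_mono) measurable
    moreover have "ennreal t < emeasure lborel {0<..t'}"
      using t t' by (simp add: ennreal_lessI)
    ultimately have "ennreal t < distribution_fun (\<lambda>x::'a. \<phi> (ball_vol x)) w"
      by order
    moreover have "(\<lambda>x::'a. \<phi> (ball_vol x)) \<in> borel_measurable lebesgue"
      by measurable
    ultimately have "\<not> rearr (\<lambda>x::'a. \<phi> (ball_vol x)) t \<le> ennreal w"
      using distribution_fun_le_of_rearr_le[of "\<lambda>x::'a. \<phi> (ball_vol x)" w t] w(2) by (meson leD)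
    then show "y \<le> rearr (\<lambda>x::'a. \<phi> (ball_vol x)) t"
      using w(1) by simp
  qed
qed

section \<open>A radial function in the weak space but not in the intermediate space\<close>

lemma ln_powr_le_mult:
  fixes y \<alpha> :: real
  assumes y: "1 \<le> y" and \<alpha>: "0 < \<alpha>"
  shows "ln y powr \<alpha> \<le> \<alpha> powr \<alpha> * y"
proof -
  have "ln (y powr (1 / \<alpha>)) \<le> y powr (1 / \<alpha>) - 1"
    using y by (intro ln_le_minus_one) simp
  then have "ln y \<le> \<alpha> * y powr (1 / \<alpha>)"
    using y \<alpha> by (simp add: ln_powr field_simps)
  then have "ln y powr \<alpha> \<le> (\<alpha> * y powr (1 / \<alpha>)) powr \<alpha>"
    using y \<alpha> by (intro powr_mono2) auto
  also have "\<dots> = \<alpha> powr \<alpha> * y"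
    using y \<alpha> by (simp add: powr_mult powr_powr)
  finally show ?thesis .
qed

lemma logw_mult_le:
  assumes s: "0 < s" "s \<le> 1" and \<alpha>: "0 < \<alpha>"
  shows "logw \<alpha> s * s \<le> \<alpha> powr \<alpha> * (exp 1 + 1)"
proof -
  have "1 \<le> exp 1 + 1 / s"
    using s by (smt (verit) exp_ge_add_one_self divide_pos_pos)
  then have "logw \<alpha> s * s \<le> \<alpha> powr \<alpha> * (exp 1 + 1 / s) * s"
    unfolding logw_def using s \<alpha> by (intro mult_right_mono ln_powr_le_mult) auto
  also have "\<dots> = \<alpha> powr \<alpha> * (exp 1 * s + 1)"
    using s by (simp add: field_simps)
  also have "\<dots> \<le> \<alpha> powr \<alpha> * (exp 1 + 1)"
    using s by (intro mult_left_mono) auto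
  finally show ?thesis .
qed

lemma logw_mult_div_le:
  assumes s: "0 < s" and \<alpha>: "0 < \<alpha>"
  shows "logw \<alpha> s * s / (1 + s) \<le> max (logw \<alpha> 1) (\<alpha> powr \<alpha> * (exp 1 + 1))"
proof (cases "s \<le> 1")
  case True
  have "logw \<alpha> s * s / (1 + s) \<le> logw \<alpha> s * s"
    using s logw_nonneg[OF s, of \<alpha>] \<alpha> by (simp add: divide_le_eq mult_le_cancel_left1 not_less)
  also have "\<dots> \<le> \<alpha> powr \<alpha> * (exp 1 + 1)"
    by (rule logw_mult_le[OF s True \<alpha>])
  finally show ?thesis
    by simp
next
  case False
  have "logw \<alpha> s * (s / (1 + s)) \<le> logw \<alpha> 1 * 1"
    using False s \<alpha> logw_nonneg[OF s, of \<alpha>] logw_nonneg[of 1 \<alpha>]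
    by (intro mult_mono logw_antimono) auto
  then show ?thesis
    by simp
qed

definition phi_weak :: "real \<Rightarrow> real \<Rightarrow> real" where
  "phi_weak q t = (1 + \<bar>t\<bar>) powr (- (1 / q))"

lemma borel_measurable_phi_weak [measurable]: "phi_weak q \<in> borel_measurable borel"
  unfolding phi_weak_def by measurable

lemma phi_weak_nonneg: "0 \<le> phi_weak q t"
  unfolding phi_weak_def by simp

lemma phi_weak_le_1: "0 < q \<Longrightarrow> phi_weak q t \<le> 1"
  unfolding phi_weak_def using powr_mono2'[of "- (1 / q)" 1 "1 + \<bar>t\<bar>"] by simp

lemma phi_weak_antimono: "0 < q \<Longrightarrow> antimono_on {0<..} (phi_weak q)"
  unfolding phi_weak_def by (intro monotone_onI powr_mono2') auto

lemma phi_weak_powr: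
  assumes "0 < q"
  shows "phi_weak q t powr q = 1 / (1 + \<bar>t\<bar>)"
proof -
  have "phi_weak q t powr q = (1 + \<bar>t\<bar>) powr (- (1 / q) * q)"
    unfolding phi_weak_def by (simp only: powr_powr)
  also have "- (1 / q) * q = - 1"
    using assms by simp
  finally show ?thesis
    by (simp add: powr_minus_divide)
qed

lemma radial_phi_weak_in_weak_LqlogL:
  assumes q: "0 < q" and \<alpha>: "0 < \<alpha>"
  shows "(\<lambda>x::'a::euclidean_space. phi_weak q (ball_vol x)) \<in> weak_LqlogL q \<alpha>"
proof -
  define K where "K = max (logw \<alpha> 1) (\<alpha> powr \<alpha> * (exp 1 + 1))"
  have "weak_LqlogL_norm q \<alpha> (\<lambda>x::'a. phi_weak q (ball_vol x)) \<le> enn_powr (ennreal K) (1 / q)"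
    unfolding weak_LqlogL_norm_def
  proof (rule SUP_least)
    fix s :: real
    assume "s \<in> {0<..}"
    then have s: "0 < s"
      by simp
    have "enn_powr (rearr (\<lambda>x::'a. phi_weak q (ball_vol x)) s) q \<le> enn_powr (ennreal (phi_weak q s)) q"
      using q s by (intro enn_powr_mono rearr_radial_le) (auto simp: phi_weak_nonneg phi_weak_antimono)
    also have "\<dots> = ennreal (1 / (1 + s))"
      using s q by (simp add: phi_weak_nonneg phi_weak_powr)
    finally have "ennreal (logw \<alpha> s * s) * enn_powr (rearr (\<lambda>x::'a. phi_weak q (ball_vol x)) s) q
        \<le> ennreal (logw \<alpha> s * s) * ennreal (1 / (1 + s))"
      by (rule mult_left_mono) simp
    also have "\<dots> = ennreal (logw \<alpha> s * s / (1 + s))"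
      using s logw_nonneg[OF s, of \<alpha>] \<alpha> by (simp add: ennreal_mult[symmetric])
    also have "\<dots> \<le> ennreal K"
      unfolding K_def using logw_mult_div_le[OF s \<alpha>] by (rule ennreal_leI)
    finally show "enn_powr (ennreal (logw \<alpha> s * s) * enn_powr (rearr (\<lambda>x::'a. phi_weak q (ball_vol x)) s) q) (1 / q)
        \<le> enn_powr (ennreal K) (1 / q)"
      by (rule enn_powr_mono) (use q in simp)
  qed
  also have "\<dots> < top"
    by (simp add: enn_powr_def)
  finally show ?thesis
    unfolding weak_LqlogL_def
    using L1_loc_bounded[of "\<lambda>x::'a. phi_weak q (ball_vol x)" 1] q by (simp add: phi_weak_nonneg phi_weak_le_1)
qed

lemma ln_le_sup_set_nn_integral_phi_weak:
  assumes q: "0 < q" and s: "0 < s"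
  shows "ennreal (ln (1 + s)) \<le> sup_set_nn_integral (\<lambda>x::'a::euclidean_space. phi_weak q (ball_vol x)) q s"
proof -
  define E where "E = {x::'a. ball_vol x \<in> {..s}}"
  have E[measurable]: "E \<in> sets lebesgue"
  proof -
    have "{x \<in> space lebesgue. ball_vol (x::'a) \<in> {..s}} \<in> sets lebesgue"
      by measurable
    then show ?thesis
      unfolding E_def by simp
  qed
  have "emeasure lebesgue E = emeasure lborel {0..s}"
    unfolding E_def by (subst emeasure_ball_vol_preimage) (auto intro: arg_cong[where f = "emeasure lborel"])
  then have E_measure: "emeasure lebesgue E = ennreal s"
    using s by simp
  have "(\<integral>\<^sup>+x\<in>E. ennreal (\<bar>phi_weak q (ball_vol x)\<bar> powr q) \<partial>lebesgue)
      = (\<integral>\<^sup>+x. ennreal (1 / (1 + \<bar>ball_vol (x::'a)\<bar>)) * indicator {..s} (ball_vol x) \<partial>lebesgue)"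
    by (intro nn_integral_cong) (simp add: E_def phi_weak_nonneg phi_weak_powr q indicator_def)
  also have "\<dots> = (\<integral>\<^sup>+t. ennreal (1 / (1 + \<bar>t\<bar>)) * indicator {0..s} t \<partial>lborel)"
    by (subst nn_integral_ball_vol) (auto intro!: nn_integral_cong split: split_indicator)
  also have "\<dots> = ennreal (ln (1 + s) - ln (1 + 0))"
  proof (rule nn_integral_FTC_Icc)
    fix t :: real
    assume "t \<in> {0..s}"
    then show "((\<lambda>t. ln (1 + t)) has_real_derivative 1 / (1 + \<bar>t\<bar>)) (at t)"
      by (auto intro!: derivative_eq_intros)
  qed (use s in auto)
  finally have "(\<integral>\<^sup>+x\<in>E. ennreal (\<bar>phi_weak q (ball_vol x)\<bar> powr q) \<partial>lebesgue) = ennreal (ln (1 + s))"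
    by simp
  moreover have "(\<integral>\<^sup>+x\<in>E. ennreal (\<bar>phi_weak q (ball_vol x)\<bar> powr q) \<partial>lebesgue)
      \<le> sup_set_nn_integral (\<lambda>x::'a. phi_weak q (ball_vol x)) q s"
    by (rule SUP_upper) (use E_measure in auto)
  ultimately show ?thesis
    by simp
qed

lemma radial_phi_weak_notin_frak_LqlogL:
  assumes q: "0 < q" and \<alpha>: "0 \<le> \<alpha>"
  shows "(\<lambda>x::'a::euclidean_space. phi_weak q (ball_vol x)) \<notin> frak_LqlogL q \<alpha>"
proof -
  let ?f = "\<lambda>x::'a. phi_weak q (ball_vol x)"
  have "of_nat n \<le> frak_LqlogL_norm q \<alpha> ?f" for n
  proof (cases "n = 0")
    case False
    define s where "s = exp (real n powr q) - 1"
    have s: "0 < s" and ln_s: "ln (1 + s) = real n powr q"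
      using False q unfolding s_def by simp_all
    have "ennreal (ln (1 + s)) \<le> 1 * sup_set_nn_integral ?f q s"
      using ln_le_sup_set_nn_integral_phi_weak[OF q s, where 'a='a] by simp
    also have "\<dots> \<le> ennreal (logw \<alpha> s) * sup_set_nn_integral ?f q s"
      using logw_ge_1[OF s \<alpha>] by (intro mult_right_mono) (auto intro: ennreal_leI[of 1, simplified])
    finally have "enn_powr (ennreal (ln (1 + s))) (1 / q)
        \<le> enn_powr (ennreal (logw \<alpha> s) * sup_set_nn_integral ?f q s) (1 / q)"
      by (rule enn_powr_mono) (use q in simp)
    also have "\<dots> \<le> frak_LqlogL_norm q \<alpha> ?f"
      unfolding frak_LqlogL_norm_def by (rule SUP_upper) (use s in simp)
    finally show ?thesis
      using ln_s q by (simp add: powr_powr ennreal_of_nat_eq_real_of_nat)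
  qed simp
  then show ?thesis
    unfolding frak_LqlogL_def using ennreal_eq_top_of_nat_le[of "frak_LqlogL_norm q \<alpha> ?f"] by auto
qed

section \<open>A radial function in the intermediate space but not in the Lorentz--Zygmund space\<close>

definition log_singularity :: "real \<Rightarrow> real \<Rightarrow> real" where
  "log_singularity \<beta> t = (if 0 < t \<and> t < 1 then 1 / (t * (- ln t) powr \<beta>) else 0)"

lemma borel_measurable_log_singularity [measurable]: "log_singularity \<beta> \<in> borel_measurable borel"
  unfolding log_singularity_def by measurable

lemma log_singularity_nonneg: "0 \<le> log_singularity \<beta> t"
  unfolding log_singularity_def by simp

lemma has_real_derivative_neg_ln_powr:
  assumes \<alpha>: "0 < \<alpha>" and t: "0 < t" "t < 1"
  shows "((\<lambda>t. (- ln t) powr (- \<alpha>) / \<alpha>) has_real_derivative log_singularity (\<alpha> + 1) t) (at t)"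
proof -
  have l: "0 < - ln t"
    using t by (simp add: ln_less_zero)
  have neg_ln: "((\<lambda>t. - ln t) has_real_derivative - (1 / t)) (at t)"
    using t by (auto intro!: derivative_eq_intros)
  have "((\<lambda>t. (- ln t) powr (- \<alpha>)) has_real_derivative
      (- \<alpha>) * (- ln t) powr (- \<alpha> - 1) * (- (1 / t))) (at t)"
    by (rule DERIV_chain2[OF has_real_derivative_powr[OF l] neg_ln])
  then have "((\<lambda>t. (- ln t) powr (- \<alpha>) / \<alpha>) has_real_derivative
      (- \<alpha>) * (- ln t) powr (- \<alpha> - 1) * (- (1 / t)) / \<alpha>) (at t)"
    by (rule DERIV_cdivide)
  moreover have "- \<alpha> - 1 = - (\<alpha> + 1)"
    by simp
  then have "(- ln t) powr (- \<alpha> - 1) = 1 / (- ln t) powr (\<alpha> + 1)"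
    by (simp only: powr_minus_divide)
  ultimately show ?thesis
    unfolding log_singularity_def using \<alpha> t by (simp add: field_simps)
qed

lemma has_real_derivative_neg_ln_neg_ln:
  assumes t: "0 < t" "t < 1"
  shows "((\<lambda>t. - ln (- ln t)) has_real_derivative log_singularity 1 t) (at t)"
proof -
  have l: "0 < - ln t"
    using t by (simp add: ln_less_zero)
  have neg_ln: "((\<lambda>t. - ln t) has_real_derivative - (1 / t)) (at t)"
    using t by (auto intro!: derivative_eq_intros)
  have "((\<lambda>t. - ln (- ln t)) has_real_derivative - ((1 / (- ln t)) * (- (1 / t)))) (at t)"
    by (intro DERIV_minus DERIV_chain2[OF DERIV_ln_divide[OF l] neg_ln])
  then show ?thesis
    unfolding log_singularity_def using t \<open>0 < - ln t\<close> by (simp add: field_simps)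
qed

lemma set_nn_integral_log_singularity_le:
  assumes \<alpha>: "0 < \<alpha>" and m: "0 < m" "m < 1"
  shows "(\<integral>\<^sup>+t\<in>{0<..<m}. ennreal (log_singularity (\<alpha> + 1) t) \<partial>lborel) \<le> ennreal ((- ln m) powr (- \<alpha>) / \<alpha>)"
  using m \<alpha> by (intro nn_integral_Ioo_le_antiderivative has_real_derivative_neg_ln_powr log_singularity_nonneg) auto

lemma nn_integral_log_singularity_1_Icc:
  assumes "0 < a" "a \<le> b" "b < 1"
  shows "(\<integral>\<^sup>+t. ennreal (log_singularity 1 t) * indicator {a..b} t \<partial>lborel) = ennreal (ln (- ln a) - ln (- ln b))"
  using assms by (subst nn_integral_FTC_Icc[where F = "\<lambda>t. - ln (- ln t)"])
    (auto intro!: has_real_derivative_neg_ln_neg_ln simp: log_singularity_nonneg)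

lemma exp_neg_mult_powr_antimono:
  fixes u v \<beta> :: real
  assumes \<beta>: "0 < \<beta>" and u: "\<beta> \<le> u" and uv: "u \<le> v"
  shows "exp (- v) * v powr \<beta> \<le> exp (- u) * u powr \<beta>"
proof -
  have u0: "0 < u"
    using \<beta> u by simp
  have "v / u = 1 + (v - u) / u"
    using u0 by (simp add: field_simps)
  also have "\<dots> \<le> 1 + (v - u) / \<beta>"
    using u uv \<beta> by (simp add: frac_le)
  also have "\<dots> \<le> exp ((v - u) / \<beta>)"
    by (rule exp_ge_add_one_self)
  finally have "(v / u) powr \<beta> \<le> exp ((v - u) / \<beta>) powr \<beta>"
    using u0 uv \<beta> by (intro powr_mono2) auto
  also have "\<dots> = exp (v - u)"
    using \<beta> by (simp add: powr_def)
  finally have "v powr \<beta> * exp u \<le> exp v * u powr \<beta>"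
    using u0 uv by (simp add: powr_divide exp_diff field_simps)
  then show ?thesis
    by (simp add: exp_minus field_simps)
qed

lemma log_singularity_antimono:
  assumes \<beta>: "0 < \<beta>" and xy: "0 < x" "x \<le> y" "y \<le> exp (- \<beta>)"
  shows "log_singularity \<beta> y \<le> log_singularity \<beta> x"
proof -
  have "y < 1"
    using xy(3) \<beta> by (meson exp_less_one_iff neg_less_0_iff_less order_le_less_trans)
  then have x1: "x < 1"
    using xy by simp
  have "ln y \<le> ln (exp (- \<beta>))"
    using xy by (subst ln_le_cancel_iff) auto
  then have "\<beta> \<le> - ln y"
    by simp
  moreover have "- ln y \<le> - ln x"
    using xy by simp
  ultimately have "exp (- (- ln x)) * (- ln x) powr \<beta> \<le> exp (- (- ln y)) * (- ln y) powr \<beta>"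
    by (rule exp_neg_mult_powr_antimono[OF \<beta>])
  then have "x * (- ln x) powr \<beta> \<le> y * (- ln y) powr \<beta>"
    using xy by simp
  moreover have "0 < x * (- ln x) powr \<beta>"
    using xy x1 by (simp add: ln_less_zero)
  ultimately show ?thesis
    unfolding log_singularity_def using xy \<open>y < 1\<close> x1 by (simp add: frac_le)
qed

text \<open>The cut-off \<open>exp (- (\<alpha> + 1))\<close> is where \<open>t (- ln t) powr (\<alpha> + 1)\<close> attains its maximum,
  so \<open>phi_frak\<close> is non-increasing.\<close>
definition phi_frak :: "real \<Rightarrow> real \<Rightarrow> real \<Rightarrow> real" where
  "phi_frak q \<alpha> t = (if 0 < t \<and> t < exp (- (\<alpha> + 1)) then log_singularity (\<alpha> + 1) t powr (1 / q) else 0)"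

lemma borel_measurable_phi_frak [measurable]: "phi_frak q \<alpha> \<in> borel_measurable borel"
  unfolding phi_frak_def by measurable

lemma phi_frak_nonneg: "0 \<le> phi_frak q \<alpha> t"
  unfolding phi_frak_def by simp

lemma phi_frak_powr:
  "0 < q \<Longrightarrow> phi_frak q \<alpha> t powr q = (if 0 < t \<and> t < exp (- (\<alpha> + 1)) then log_singularity (\<alpha> + 1) t else 0)"
  unfolding phi_frak_def using log_singularity_nonneg[of "\<alpha> + 1" t] by (simp add: powr_powr)

lemma phi_frak_antimono:
  assumes q: "0 < q" and \<alpha>: "0 \<le> \<alpha>"
  shows "antimono_on {0<..} (phi_frak q \<alpha>)"
proof (rule monotone_onI)
  fix x y :: real
  assume "x \<in> {0<..}" "x \<le> y"
  then show "phi_frak q \<alpha> y \<le> phi_frak q \<alpha> x"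
    using q \<alpha> log_singularity_antimono[of "\<alpha> + 1" x y] log_singularity_nonneg
    by (auto simp: phi_frak_def intro: powr_mono2)
qed

lemma phi_frak_continuous_at_right:
  assumes q: "0 < q" and \<alpha>: "0 \<le> \<alpha>" and t: "0 < t"
  shows "continuous (at_right t) (phi_frak q \<alpha>)"
proof (cases "t < exp (- (\<alpha> + 1))")
  case True
  define g where "g y = (1 / (y * (- ln y) powr (\<alpha> + 1))) powr (1 / q)" for y
  have "exp (- (\<alpha> + 1)) < 1"
    using \<alpha> by simp
  then have "eventually (\<lambda>y. y \<in> {0<..<exp (- (\<alpha> + 1))}) (nhds t)"
    using True t by (intro eventually_nhds_in_open) auto
  then have "eventually (\<lambda>y. phi_frak q \<alpha> y = g y) (nhds t)"
  proof eventually_elim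
    case (elim y)
    then have "y < 1"
      using \<open>exp (- (\<alpha> + 1)) < 1\<close> by (meson greaterThanLessThan_iff less_trans)
    with elim show ?case
      by (simp add: phi_frak_def log_singularity_def g_def)
  qed
  moreover have "isCont g t"
    unfolding g_def using t True \<open>exp (- (\<alpha> + 1)) < 1\<close>
    by (intro continuous_intros) (auto simp: ln_less_zero)
  ultimately show ?thesis
    by (simp add: isCont_cong continuous_at_imp_continuous_at_within)
next
  case False
  then have "eventually (\<lambda>y. phi_frak q \<alpha> y = phi_frak q \<alpha> t) (at_right t)"
    unfolding eventually_at_right_field by (intro exI[of _ "t + 1"]) (auto simp: phi_frak_def)
  then show ?thesis
    unfolding continuous_within by (rule tendsto_eventually)
qed

lemma enn_powr_rearr_radial_phi_frak:
  assumes q: "0 < q" and \<alpha>: "0 \<le> \<alpha>" and t: "0 < t"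
  shows "enn_powr (rearr (\<lambda>x::'a::euclidean_space. phi_frak q \<alpha> (ball_vol x)) t) q
           = ennreal (if t < exp (- (\<alpha> + 1)) then log_singularity (\<alpha> + 1) t else 0)"
  using rearr_radial[OF borel_measurable_phi_frak phi_frak_nonneg phi_frak_antimono[OF q \<alpha>]
      phi_frak_continuous_at_right[OF q \<alpha>] t, where 'a='a] t q
  by (simp add: phi_frak_nonneg phi_frak_powr)

lemma ln_exp1_plus_le:
  fixes u :: real
  assumes u: "exp 1 \<le> u"
  shows "ln (exp 1 + u) \<le> 2 * ln u"
proof -
  have e: "2 \<le> exp (1::real)"
    using exp_ge_add_one_self[of 1] by simp
  have "exp 1 * 1 \<le> u * (u - 1)"
    using u e by (intro mult_mono) auto
  then have "exp 1 + u \<le> u * u"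
    by (simp add: algebra_simps)
  moreover have "0 < u"
    using u exp_gt_zero[of 1] by linarith
  ultimately have "ln (exp 1 + u) \<le> ln (u * u)"
    by (subst ln_le_cancel_iff) (auto intro: add_pos_pos)
  also have "\<dots> = 2 * ln u"
    using u e by (simp add: ln_mult)
  finally show ?thesis .
qed

lemma logw_mult_neg_ln_powr_le:
  assumes \<alpha>: "0 < \<alpha>" and m: "0 < m" "m \<le> exp (- (\<alpha> + 1))"
  shows "logw \<alpha> m * ((- ln m) powr (- \<alpha>) / \<alpha>) \<le> 2 powr \<alpha> / \<alpha>"
proof -
  define u where "u = 1 / m"
  have "exp (\<alpha> + 1) = 1 / exp (- (\<alpha> + 1))"
    by (metis exp_minus inverse_eq_divide inverse_inverse_eq)
  also have "\<dots> \<le> u"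
    unfolding u_def using m by (intro divide_left_mono) auto
  finally have "exp (\<alpha> + 1) \<le> u" .
  moreover have "exp 1 \<le> exp (\<alpha> + 1)"
    using \<alpha> by simp
  ultimately have u: "exp 1 \<le> u"
    by linarith
  then have ln_u: "1 \<le> ln u"
    using ln_exp[of 1] ln_le_cancel_iff[of "exp 1" u] by (metis exp_gt_zero order_less_le_trans)
  have "ln (exp 1 + u) powr \<alpha> \<le> (2 * ln u) powr \<alpha>"
    using ln_exp1_plus_le[OF u] one_le_ln_exp1_plus[of u] u exp_gt_zero[of 1] \<alpha>
    by (intro powr_mono2) auto
  then have logw_le: "logw \<alpha> m \<le> 2 powr \<alpha> * ln u powr \<alpha>"
    unfolding logw_def u_def using ln_u by (simp add: powr_mult)
  have "- ln m = ln u"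
    unfolding u_def using m by (simp add: ln_div)
  then have "logw \<alpha> m * ((- ln m) powr (- \<alpha>) / \<alpha>) = logw \<alpha> m * (ln u powr (- \<alpha>) / \<alpha>)"
    by simp
  also have "\<dots> \<le> 2 powr \<alpha> * ln u powr \<alpha> * (ln u powr (- \<alpha>) / \<alpha>)"
    using logw_le \<alpha> by (intro mult_right_mono) auto
  also have "\<dots> = 2 powr \<alpha> / \<alpha>"
    using ln_u by (simp add: powr_minus field_simps)
  finally show ?thesis .
qed

lemma logw_mult_sup_set_nn_integral_phi_frak_le:
  assumes q: "0 < q" and \<alpha>: "0 < \<alpha>" and s: "0 < s"
  shows "ennreal (logw \<alpha> s) * sup_set_nn_integral (\<lambda>x::'a::euclidean_space. phi_frak q \<alpha> (ball_vol x)) q s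
           \<le> ennreal (2 powr \<alpha> / \<alpha>)"
proof -
  let ?f = "\<lambda>x::'a. phi_frak q \<alpha> (ball_vol x)"
  define m where "m = min s (exp (- (\<alpha> + 1)))"
  have m: "0 < m" "m \<le> exp (- (\<alpha> + 1))" "m \<le> s"
    unfolding m_def using s by auto
  have "m < 1"
    using m(2) \<alpha> by (smt (verit) exp_less_one_iff)
  have "sup_set_nn_integral ?f q s \<le> (\<integral>\<^sup>+t\<in>{0<..<s}. enn_powr (rearr ?f t) q \<partial>lborel)"
    using q s by (intro sup_set_nn_integral_le_rearr) auto
  also have "\<dots> \<le> (\<integral>\<^sup>+t\<in>{0<..<m}. ennreal (log_singularity (\<alpha> + 1) t) \<partial>lborel)"
    using q \<alpha> by (intro nn_integral_mono)
      (auto simp: enn_powr_rearr_radial_phi_frak m_def indicator_def log_singularity_nonneg)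
  also have "\<dots> \<le> ennreal ((- ln m) powr (- \<alpha>) / \<alpha>)"
    using \<alpha> m \<open>m < 1\<close> by (intro set_nn_integral_log_singularity_le) auto
  finally have "ennreal (logw \<alpha> s) * sup_set_nn_integral ?f q s
      \<le> ennreal (logw \<alpha> s) * ennreal ((- ln m) powr (- \<alpha>) / \<alpha>)"
    by (rule mult_left_mono) simp
  also have "\<dots> = ennreal (logw \<alpha> s * ((- ln m) powr (- \<alpha>) / \<alpha>))"
    using logw_nonneg[OF s, of \<alpha>] \<alpha> by (intro ennreal_mult[symmetric]) auto
  also have "\<dots> \<le> ennreal (logw \<alpha> m * ((- ln m) powr (- \<alpha>) / \<alpha>))"
    using m \<alpha> logw_antimono[of m s \<alpha>] by (intro ennreal_leI mult_right_mono) auto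
  also have "\<dots> \<le> ennreal (2 powr \<alpha> / \<alpha>)"
    using logw_mult_neg_ln_powr_le[OF \<alpha> m(1,2)] by (rule ennreal_leI)
  finally show ?thesis .
qed

lemma integrable_radial_phi_frak:
  assumes q: "1 \<le> q" and \<alpha>: "0 < \<alpha>"
  shows "integrable lebesgue (\<lambda>x::'a::euclidean_space. phi_frak q \<alpha> (ball_vol x))"
proof (rule integrableI_bounded)
  let ?c = "exp (- (\<alpha> + 1))"
  have c: "0 < ?c" "?c < 1"
    using \<alpha> by auto
  have "(\<integral>\<^sup>+x. ennreal (norm (phi_frak q \<alpha> (ball_vol (x::'a)))) \<partial>lebesgue)
      = (\<integral>\<^sup>+x. ennreal (phi_frak q \<alpha> (ball_vol (x::'a))) \<partial>lebesgue)"
    by (simp add: phi_frak_nonneg)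
  also have "\<dots> = (\<integral>\<^sup>+t\<in>{0..}. ennreal (phi_frak q \<alpha> t) \<partial>lborel)"
    by (rule nn_integral_ball_vol) measurable
  also have "\<dots> \<le> (\<integral>\<^sup>+t\<in>{0<..<?c}. 1 + ennreal (log_singularity (\<alpha> + 1) t) \<partial>lborel)"
  proof (rule nn_integral_mono)
    fix t :: real
    have "phi_frak q \<alpha> t \<le> 1 + log_singularity (\<alpha> + 1) t"
      using powr_inverse_le_1_plus[OF log_singularity_nonneg q] by (simp add: phi_frak_def log_singularity_nonneg)
    then have "ennreal (phi_frak q \<alpha> t) \<le> ennreal (1 + log_singularity (\<alpha> + 1) t)"
      by (rule ennreal_leI)
    also have "\<dots> = 1 + ennreal (log_singularity (\<alpha> + 1) t)"
      by (simp add: ennreal_plus log_singularity_nonneg)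
    finally have "ennreal (phi_frak q \<alpha> t) \<le> 1 + ennreal (log_singularity (\<alpha> + 1) t)" .
    moreover have "phi_frak q \<alpha> t = 0" if "t \<notin> {0<..<?c}"
      using that by (auto simp: phi_frak_def)
    ultimately show "ennreal (phi_frak q \<alpha> t) * indicator {0..} t
        \<le> (1 + ennreal (log_singularity (\<alpha> + 1) t)) * indicator {0<..<?c} t"
      by (cases "t \<in> {0<..<?c}") (auto simp: indicator_def)
  qed
  also have "\<dots> = (\<integral>\<^sup>+t. indicator {0<..<?c} t + ennreal (log_singularity (\<alpha> + 1) t) * indicator {0<..<?c} t \<partial>lborel)"
    by (intro nn_integral_cong) (simp add: distrib_right)
  also have "\<dots> = emeasure lborel {0<..<?c} + (\<integral>\<^sup>+t\<in>{0<..<?c}. ennreal (log_singularity (\<alpha> + 1) t) \<partial>lborel)"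
    by (subst nn_integral_add) auto
  also have "\<dots> < top"
    using set_nn_integral_log_singularity_le[OF \<alpha> c] c by (auto simp: less_top[symmetric] top_unique)
  finally show "(\<integral>\<^sup>+x. ennreal (norm (phi_frak q \<alpha> (ball_vol (x::'a)))) \<partial>lebesgue) < \<infinity>"
    by simp
qed measurable

lemma radial_phi_frak_in_frak_LqlogL:
  assumes q: "1 \<le> q" and \<alpha>: "0 < \<alpha>"
  shows "(\<lambda>x::'a::euclidean_space. phi_frak q \<alpha> (ball_vol x)) \<in> frak_LqlogL q \<alpha>"
proof -
  have "frak_LqlogL_norm q \<alpha> (\<lambda>x::'a. phi_frak q \<alpha> (ball_vol x)) \<le> enn_powr (ennreal (2 powr \<alpha> / \<alpha>)) (1 / q)"
    unfolding frak_LqlogL_norm_def using q \<alpha>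
    by (intro SUP_least enn_powr_mono logw_mult_sup_set_nn_integral_phi_frak_le) auto
  also have "\<dots> < top"
    by (simp add: enn_powr_def)
  finally show ?thesis
    unfolding frak_LqlogL_def using integrable_radial_phi_frak[OF assms, where 'a='a]
    by (simp add: L1_loc_integrable)
qed

lemma log_singularity_1_eq:
  assumes "0 < t" "t < 1"
  shows "log_singularity 1 t = (- ln t) powr \<alpha> * log_singularity (\<alpha> + 1) t"
proof -
  have "0 < - ln t"
    using assms by (simp add: ln_less_zero)
  then have "(- ln t) powr (\<alpha> + 1) = (- ln t) powr \<alpha> * (- ln t)"
    by (simp add: powr_add)
  with assms \<open>0 < - ln t\<close> show ?thesis
    unfolding log_singularity_def by (simp add: field_simps)
qed

lemma neg_ln_powr_le_logw:
  assumes "0 < t" "t < 1" "0 \<le> \<alpha>"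
  shows "(- ln t) powr \<alpha> \<le> logw \<alpha> t"
proof -
  have "ln (1 / t) \<le> ln (exp 1 + 1 / t)"
    using assms by (subst ln_le_cancel_iff) (auto intro: add_pos_pos)
  then show ?thesis
    unfolding logw_def using assms by (intro powr_mono2) (auto simp: ln_div ln_less_zero)
qed

lemma log_singularity_1_le_logw_mult_rearr_phi_frak:
  assumes q: "0 < q" and \<alpha>: "0 \<le> \<alpha>" and t: "0 < t" "t < exp (- (\<alpha> + 1))"
  shows "ennreal (log_singularity 1 t)
           \<le> ennreal (logw \<alpha> t) * enn_powr (rearr (\<lambda>x::'a::euclidean_space. phi_frak q \<alpha> (ball_vol x)) t) q"
proof -
  have "t < 1"
    using t(2) \<alpha> by (smt (verit) exp_less_one_iff)
  have "log_singularity 1 t \<le> logw \<alpha> t * log_singularity (\<alpha> + 1) t"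
    unfolding log_singularity_1_eq[OF t(1) \<open>t < 1\<close>, of \<alpha>]
    using neg_ln_powr_le_logw[OF t(1) \<open>t < 1\<close> \<alpha>] log_singularity_nonneg by (rule mult_right_mono)
  then have "ennreal (log_singularity 1 t) \<le> ennreal (logw \<alpha> t) * ennreal (log_singularity (\<alpha> + 1) t)"
    using logw_nonneg[OF t(1) \<alpha>] log_singularity_nonneg by (simp add: ennreal_mult[symmetric] ennreal_leI)
  then show ?thesis
    using t by (simp add: enn_powr_rearr_radial_phi_frak[OF q \<alpha> t(1)])
qed

lemma radial_phi_frak_notin_LqlogL:
  assumes q: "0 < q" and \<alpha>: "0 \<le> \<alpha>"
  shows "(\<lambda>x::'a::euclidean_space. phi_frak q \<alpha> (ball_vol x)) \<notin> LqlogL q \<alpha>"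
proof -
  let ?X = "\<integral>\<^sup>+ s \<in> {0<..}. ennreal (logw \<alpha> s)
    * enn_powr (rearr (\<lambda>x::'a. phi_frak q \<alpha> (ball_vol x)) s) q \<partial>lborel"
  have "of_nat n \<le> ?X" for n
  proof -
    define b where "b = exp (- (\<alpha> + 2))"
    define a where "a = exp (- (\<alpha> + 2) * exp (real n))"
    have b: "0 < b" "b < exp (- (\<alpha> + 1))" "b < 1"
      unfolding b_def using \<alpha> by auto
    have "(\<alpha> + 2) * 1 \<le> (\<alpha> + 2) * exp (real n)"
      using \<alpha> by (intro mult_left_mono) auto
    then have "- (\<alpha> + 2) * exp (real n) \<le> - (\<alpha> + 2)"
      by (simp only: mult_minus_left neg_le_iff_le mult_1_right)
    then have ab: "0 < a" "a \<le> b"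
      unfolding a_def b_def by auto
    have "- ln a = (\<alpha> + 2) * exp (real n)" "- ln b = \<alpha> + 2"
      unfolding a_def b_def by (simp_all add: algebra_simps)
    then have "of_nat n = (\<integral>\<^sup>+t. ennreal (log_singularity 1 t) * indicator {a..b} t \<partial>lborel)"
      using \<alpha> by (simp add: nn_integral_log_singularity_1_Icc[OF ab b(3)] ln_mult ennreal_of_nat_eq_real_of_nat)
    also have "\<dots> \<le> ?X"
    proof (rule nn_integral_mono)
      fix t :: real
      have "ennreal (log_singularity 1 t) \<le> ennreal (logw \<alpha> t)
          * enn_powr (rearr (\<lambda>x::'a. phi_frak q \<alpha> (ball_vol x)) t) q" if "t \<in> {a..b}"
        using that ab b by (intro log_singularity_1_le_logw_mult_rearr_phi_frak q \<alpha>) auto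
      then show "ennreal (log_singularity 1 t) * indicator {a..b} t \<le> ennreal (logw \<alpha> t)
          * enn_powr (rearr (\<lambda>x::'a. phi_frak q \<alpha> (ball_vol x)) t) q * indicator {0<..} t"
        using ab by (cases "t \<in> {a..b}") (auto simp: indicator_def)
    qed
    finally show ?thesis .
  qed
  then have "?X = top"
    by (rule ennreal_eq_top_of_nat_le)
  then show ?thesis
    unfolding LqlogL_def LqlogL_norm_def by simp
qed

theorem propositionA1:
  fixes q \<alpha> :: real
  assumes "1 \<le> q" and "\<alpha> \<ge> 0"
  shows "(\<forall>f \<in> (LqlogL q \<alpha> :: ('a::euclidean_space \<Rightarrow> real) set).
            frak_LqlogL_norm q \<alpha> f \<le> LqlogL_norm q \<alpha> f)
       \<and> (\<forall>f \<in> (frak_LqlogL q \<alpha> :: ('a \<Rightarrow> real) set).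
            weak_LqlogL_norm q \<alpha> f \<le> frak_LqlogL_norm q \<alpha> f)
       \<and> (\<alpha> > 0 \<longrightarrow>
            (LqlogL q \<alpha> :: ('a \<Rightarrow> real) set) \<subset> frak_LqlogL q \<alpha>
          \<and> (frak_LqlogL q \<alpha> :: ('a \<Rightarrow> real) set) \<subset> weak_LqlogL q \<alpha>)"
proof -
  have q: "0 < q"
    using assms(1) by simp
  have strict: "(LqlogL q \<alpha> :: ('a \<Rightarrow> real) set) \<subset> frak_LqlogL q \<alpha>
      \<and> (frak_LqlogL q \<alpha> :: ('a \<Rightarrow> real) set) \<subset> weak_LqlogL q \<alpha>" if \<alpha>: "0 < \<alpha>"
    using LqlogL_subset_frak_LqlogL[OF q assms(2)] radial_phi_frak_in_frak_LqlogL[OF assms(1) \<alpha>]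
      radial_phi_frak_notin_LqlogL[OF q assms(2)]
      frak_LqlogL_subset_weak_LqlogL[OF q assms(2)] radial_phi_weak_in_weak_LqlogL[OF q \<alpha>]
      radial_phi_weak_notin_frak_LqlogL[OF q assms(2)]
    by blast
  show ?thesis
    using strict q assms(2)
    by (auto simp: LqlogL_def frak_LqlogL_def intro!: frak_LqlogL_norm_le_LqlogL_norm
        weak_LqlogL_norm_le_frak_LqlogL_norm borel_measurable_L1_loc)
qed

end
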